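(* Let $R$ be a ring, $M$ an $R$-module, and $p$ a weakly associated prime of $M$. Then $\operatorname{p-depth}_{R_p}M_p=0$, i.e. $\operatorname{p-grade}(pR_p,M_p)=0$.
   Context: All rings are commutative with identity. A prime $p$ is weakly associated to $M$ if $p$ is minimal over $(0:_Rz)$ for some $z\in M$. A possibly improper regular sequence on a module $N$ over a ring $A$: each $x_i$ is a non-zero-divisor on $N/(x_1,\dots,x_{i-1})N$. $\operatorname{grade}(I,N)$ is the supremum of lengths of possibly improper regular sequences on $N$ contained in the ideal $I$. The polynomial grade is $\operatorname{p-grade}(I,N)=\lim_{m\to\infty}\operatorname{grade}(IA[t_1,\dots,t_m],A[t_1,\dots,t_m]\otimes_AN)$ ($t_i$ indeterminates). For a quasi-local ring $(A,n)$, $\operatorname{p-depth}N=\operatorname{p-grade}(n,N)$. *)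

theory Defs
  imports "HOL-Algebra.Algebra" "HOL-Library.Extended_Real"
begin

definition ann :: "('a, 'b) module \<Rightarrow> 'a ring \<Rightarrow> 'b \<Rightarrow> 'a set" where
  "ann M R z = {r \<in> carrier R. r \<odot>\<^bsub>M\<^esub> z = \<zero>\<^bsub>M\<^esub>}"

definition minimal_prime_over :: "'a ring \<Rightarrow> 'a set \<Rightarrow> 'a set \<Rightarrow> bool" where
  "minimal_prime_over R J P \<longleftrightarrow> primeideal P R \<and> J \<subseteq> P \<and>
     (\<forall>Q. primeideal Q R \<and> J \<subseteq> Q \<and> Q \<subseteq> P \<longrightarrow> Q = P)"

definition weakly_associated :: "'a ring \<Rightarrow> ('a, 'b) module \<Rightarrow> 'a set \<Rightarrow> bool" where
  "weakly_associated R M P \<longleftrightarrow> (\<exists>z \<in> carrier M. minimal_prime_over R (ann M R z) P)"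

definition loc_rel :: "'a ring \<Rightarrow> 'a set \<Rightarrow> (('a \<times> 'a) \<times> ('a \<times> 'a)) set" where
  "loc_rel R S = {((a, s), (b, t)). a \<in> carrier R \<and> s \<in> S \<and> b \<in> carrier R \<and> t \<in> S \<and>
     (\<exists>u \<in> S. u \<otimes>\<^bsub>R\<^esub> (t \<otimes>\<^bsub>R\<^esub> a \<ominus>\<^bsub>R\<^esub> s \<otimes>\<^bsub>R\<^esub> b) = \<zero>\<^bsub>R\<^esub>)}"

text \<open>The localized ring R_P; elements are equivalence classes of fractions a/s.
  Operations are given on classes via images of representative pairs.\<close>
definition loc_ring :: "'a ring \<Rightarrow> 'a set \<Rightarrow> ('a \<times> 'a) set ring" where
  "loc_ring R P = (let S = carrier R - P; r = loc_rel R S in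
     \<lparr> partial_object.carrier = (carrier R \<times> S) // r,
       monoid.mult = (\<lambda>U V. r `` {(a \<otimes>\<^bsub>R\<^esub> b, s \<otimes>\<^bsub>R\<^esub> t) | a s b t. (a, s) \<in> U \<and> (b, t) \<in> V}),
       monoid.one = r `` {(\<one>\<^bsub>R\<^esub>, \<one>\<^bsub>R\<^esub>)},
       ring.zero = r `` {(\<zero>\<^bsub>R\<^esub>, \<one>\<^bsub>R\<^esub>)},
       ring.add = (\<lambda>U V. r `` {(t \<otimes>\<^bsub>R\<^esub> a \<oplus>\<^bsub>R\<^esub> s \<otimes>\<^bsub>R\<^esub> b, s \<otimes>\<^bsub>R\<^esub> t) | a s b t.
                            (a, s) \<in> U \<and> (b, t) \<in> V}) \<rparr>)"

definition loc_map :: "'a ring \<Rightarrow> 'a set \<Rightarrow> 'a \<Rightarrow> ('a \<times> 'a) set" where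
  "loc_map R P a = loc_rel R (carrier R - P) `` {(a, \<one>\<^bsub>R\<^esub>)}"

definition loc_ideal :: "'a ring \<Rightarrow> 'a set \<Rightarrow> ('a \<times> 'a) set set" where
  "loc_ideal R P = genideal (loc_ring R P) (loc_map R P ` P)"

definition loc_mod_rel :: "'a ring \<Rightarrow> ('a, 'b) module \<Rightarrow> 'a set \<Rightarrow> (('b \<times> 'a) \<times> ('b \<times> 'a)) set" where
  "loc_mod_rel R M S = {((m, s), (n, t)). m \<in> carrier M \<and> s \<in> S \<and> n \<in> carrier M \<and> t \<in> S \<and>
     (\<exists>u \<in> S. u \<odot>\<^bsub>M\<^esub> (t \<odot>\<^bsub>M\<^esub> m \<ominus>\<^bsub>M\<^esub> s \<odot>\<^bsub>M\<^esub> n) = \<zero>\<^bsub>M\<^esub>)}"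

text \<open>The localized module M_P as an R_P-module (the multiplicative fields of the
  module record are irrelevant and left undefined).\<close>
definition loc_mod :: "'a ring \<Rightarrow> ('a, 'b) module \<Rightarrow> 'a set \<Rightarrow> (('a \<times> 'a) set, ('b \<times> 'a) set) module" where
  "loc_mod R M P = (let S = carrier R - P; r = loc_mod_rel R M S in
     \<lparr> partial_object.carrier = (carrier M \<times> S) // r,
       monoid.mult = undefined,
       monoid.one = undefined,
       ring.zero = r `` {(\<zero>\<^bsub>M\<^esub>, \<one>\<^bsub>R\<^esub>)},
       ring.add = (\<lambda>U V. r `` {(t \<odot>\<^bsub>M\<^esub> m \<oplus>\<^bsub>M\<^esub> s \<odot>\<^bsub>M\<^esub> n, s \<otimes>\<^bsub>R\<^esub> t) | m s n t.
                            (m, s) \<in> U \<and> (n, t) \<in> V}),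
       module.smult = (\<lambda>U V. r `` {(a \<odot>\<^bsub>M\<^esub> m, s \<otimes>\<^bsub>R\<^esub> t) | a s m t. (a, s) \<in> U \<and> (m, t) \<in> V}) \<rparr>)"

text \<open>Monomials in the first m variables are exponent vectors vanishing from index m on.\<close>
definition mons :: "nat \<Rightarrow> (nat \<Rightarrow> nat) set" where
  "mons m = {\<alpha>. \<forall>i\<ge>m. \<alpha> i = 0}"

definition divs :: "nat \<Rightarrow> (nat \<Rightarrow> nat) \<Rightarrow> (nat \<Rightarrow> nat) set" where
  "divs m \<alpha> = {\<beta>. (\<forall>i. \<beta> i \<le> \<alpha> i) \<and> \<beta> \<in> mons m}"

definition poly_ring :: "'c ring \<Rightarrow> nat \<Rightarrow> ((nat \<Rightarrow> nat) \<Rightarrow> 'c) ring" where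
  "poly_ring A m =
     \<lparr> partial_object.carrier = {f. (\<forall>\<alpha>. f \<alpha> \<in> carrier A) \<and> (\<forall>\<alpha>. \<alpha> \<notin> mons m \<longrightarrow> f \<alpha> = \<zero>\<^bsub>A\<^esub>)
                     \<and> finite {\<alpha>. f \<alpha> \<noteq> \<zero>\<^bsub>A\<^esub>}},
       monoid.mult = (\<lambda>f g \<alpha>. if \<alpha> \<in> mons m
                 then finsum A (\<lambda>\<beta>. f \<beta> \<otimes>\<^bsub>A\<^esub> g (\<lambda>i. \<alpha> i - \<beta> i)) (divs m \<alpha>)
                 else \<zero>\<^bsub>A\<^esub>),
       monoid.one = (\<lambda>\<alpha>. if \<alpha> = (\<lambda>_. 0) then \<one>\<^bsub>A\<^esub> else \<zero>\<^bsub>A\<^esub>),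
       ring.zero = (\<lambda>\<alpha>. \<zero>\<^bsub>A\<^esub>),
       ring.add = (\<lambda>f g \<alpha>. f \<alpha> \<oplus>\<^bsub>A\<^esub> g \<alpha>) \<rparr>"

definition const_poly :: "'c ring \<Rightarrow> 'c \<Rightarrow> ((nat \<Rightarrow> nat) \<Rightarrow> 'c)" where
  "const_poly A c = (\<lambda>\<alpha>. if \<alpha> = (\<lambda>_. 0) then c else \<zero>\<^bsub>A\<^esub>)"

text \<open>A[t_1..t_m] \<otimes>_A N, realised (canonically) as the A[t]-module N[t_1..t_m] of
  polynomials with coefficients in N.\<close>
definition poly_mod :: "'c ring \<Rightarrow> ('c, 'd) module \<Rightarrow> nat \<Rightarrow> ((nat \<Rightarrow> nat) \<Rightarrow> 'c, (nat \<Rightarrow> nat) \<Rightarrow> 'd) module" where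
  "poly_mod A N m =
     \<lparr> partial_object.carrier = {v. (\<forall>\<alpha>. v \<alpha> \<in> carrier N) \<and> (\<forall>\<alpha>. \<alpha> \<notin> mons m \<longrightarrow> v \<alpha> = \<zero>\<^bsub>N\<^esub>)
                     \<and> finite {\<alpha>. v \<alpha> \<noteq> \<zero>\<^bsub>N\<^esub>}},
       monoid.mult = undefined,
       monoid.one = undefined,
       ring.zero = (\<lambda>\<alpha>. \<zero>\<^bsub>N\<^esub>),
       ring.add = (\<lambda>v w \<alpha>. v \<alpha> \<oplus>\<^bsub>N\<^esub> w \<alpha>),
       module.smult = (\<lambda>f v \<alpha>. if \<alpha> \<in> mons m
                 then finsum N (\<lambda>\<beta>. f \<beta> \<odot>\<^bsub>N\<^esub> v (\<lambda>i. \<alpha> i - \<beta> i)) (divs m \<alpha>)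
                 else \<zero>\<^bsub>N\<^esub>) \<rparr>"

definition seq_submod :: "('c, 'd) module \<Rightarrow> 'c list \<Rightarrow> 'd set" where
  "seq_submod N ys = {finsum N (\<lambda>j. (ys ! j) \<odot>\<^bsub>N\<^esub> w j) {..<length ys} | w.
                        w \<in> {..<length ys} \<rightarrow> carrier N}"

text \<open>Possibly improper regular sequence: each x_i is a non-zero-divisor on
  N/(x_1,...,x_{i-1})N.\<close>
definition reg_seq :: "'c ring \<Rightarrow> ('c, 'd) module \<Rightarrow> 'c list \<Rightarrow> bool" where
  "reg_seq A N xs \<longleftrightarrow> set xs \<subseteq> carrier A \<and>
     (\<forall>i < length xs. \<forall>v \<in> carrier N.
        (xs ! i) \<odot>\<^bsub>N\<^esub> v \<in> seq_submod N (take i xs) \<longrightarrow> v \<in> seq_submod N (take i xs))"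

definition grade :: "'c ring \<Rightarrow> 'c set \<Rightarrow> ('c, 'd) module \<Rightarrow> enat" where
  "grade A I N = Sup {enat (length xs) | xs. reg_seq A N xs \<and> set xs \<subseteq> I}"

definition p_grade :: "'c ring \<Rightarrow> 'c set \<Rightarrow> ('c, 'd) module \<Rightarrow> enat" where
  "p_grade A I N = lim (\<lambda>m. grade (poly_ring A m)
                              (genideal (poly_ring A m) (const_poly A ` I))
                              (poly_mod A N m))"

end

theory Submission
  imports Defs
begin

text \<open>Let \<open>z \<in> M\<close> be such that \<open>P\<close> is minimal over \<open>ann z\<close>. Minimality forces every
  \<open>a \<in> P\<close> to satisfy \<open>u a\<^sup>n z = 0\<close> for some \<open>u \<notin> P\<close>, i.e. \<open>a/1\<close> acts nilpotently on \<open>z/1\<close>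
  in \<open>M\<^sub>P\<close>. Hence for finitely many \<open>a\<^sub>1, ..., a\<^sub>k \<in> P\<close>, multiplying \<open>z\<close> by suitable powers
  of the \<open>a\<^sub>i\<close> gives some \<open>y\<close> with \<open>y/1 \<noteq> 0\<close> but \<open>(a\<^sub>i/1)(y/1) = 0\<close> for all \<open>i\<close>. A polynomial
  with coefficients in \<open>P R\<^sub>P\<close> has only finitely many coefficients, so it annihilates the
  nonzero constant polynomial \<open>y/1\<close> of \<open>M\<^sub>P[t\<^sub>1, ..., t\<^sub>m]\<close>. Thus no element of the extended
  ideal is a nonzerodivisor, and the grade is \<open>0\<close> for every \<open>m\<close>.\<close>

lemma equiv_Image_eq_class:
  assumes "equiv A r" "x \<in> T" "\<And>y. y \<in> T \<Longrightarrow> (x, y) \<in> r"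
  shows "r `` T = r `` {x}"
  using assms unfolding equiv_def trans_def by blast

lemma (in abelian_group) minus_eq_zero_iff:
  assumes "x \<in> carrier G" "y \<in> carrier G"
  shows "x \<ominus> y = \<zero> \<longleftrightarrow> x = y"
  using assms by (metis a_minus_def add.inv_closed minus_equality r_neg)

lemma (in ring) finsum_in_ideal:
  assumes "ideal J R" "finite A" "\<And>a. a \<in> A \<Longrightarrow> f a \<in> J"
  shows "finsum R f A \<in> J"
proof -
  interpret J: ideal J R by (rule assms(1))
  from assms(2,3) show ?thesis
  proof (induction A rule: finite_induct)
    case empty then show ?case using J.zero_closed by simp
  next
    case (insert a A) then show ?case using J.Icarr by (subst finsum_insert) (auto intro: J.a_closed)
  qed
qed

lemma (in cring) idealI_cring:
  assumes "J \<subseteq> carrier R" "\<zero> \<in> J" "\<And>a b. a \<in> J \<Longrightarrow> b \<in> J \<Longrightarrow> a \<oplus> b \<in> J"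
    "\<And>a x. a \<in> J \<Longrightarrow> x \<in> carrier R \<Longrightarrow> x \<otimes> a \<in> J"
  shows "ideal J R"
proof (rule idealI)
  show "subgroup J (add_monoid R)"
  proof (rule add.subgroupI)
    show "J \<subseteq> carrier R" "J \<noteq> {}" using assms by auto
  next
    fix a assume "a \<in> J"
    then have "\<ominus> a = (\<ominus> \<one>) \<otimes> a" using assms(1) l_minus[of \<one> a] by auto
    then show "\<ominus> a \<in> J" using assms(4) \<open>a \<in> J\<close> by simp
  qed (use assms in auto)
  fix a x assume "a \<in> J" "x \<in> carrier R"
  then show "x \<otimes> a \<in> J" "a \<otimes> x \<in> J" using assms m_comm by (auto simp: subset_iff)
qed (rule ring_axioms)

section \<open>Prime ideals avoiding a multiplicative set\<close>

lemma (in cring) ideal_disjoint_maximal_is_prime: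
  assumes Q: "ideal Q R" "Q \<inter> T = {}"
    and T: "\<one> \<in> T" "\<And>s t. s \<in> T \<Longrightarrow> t \<in> T \<Longrightarrow> s \<otimes> t \<in> T"
    and max: "\<And>Y. ideal Y R \<Longrightarrow> Q \<subseteq> Y \<Longrightarrow> Y \<inter> T = {} \<Longrightarrow> Y = Q"
  shows "primeideal Q R"
proof (rule primeidealI[OF Q(1) is_cring])
  interpret Q: ideal Q R by (rule Q(1))
  have meet: "\<exists>q \<in> Q. \<exists>x \<in> carrier R. q \<oplus> x \<otimes> c \<in> T" if c: "c \<in> carrier R" "c \<notin> Q" for c
  proof -
    let ?X = "Q <+>\<^bsub>R\<^esub> PIdl c"
    have X: "ideal ?X R" by (rule add_ideals[OF Q(1) cgenideal_ideal[OF c(1)]])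
    have X_iff: "t \<in> ?X \<longleftrightarrow> (\<exists>q \<in> Q. \<exists>x \<in> carrier R. t = q \<oplus> x \<otimes> c)" for t
      unfolding set_add_def' cgenideal_def by blast
    have "Q \<subseteq> ?X"
    proof
      fix q assume "q \<in> Q"
      then have "q = q \<oplus> \<zero> \<otimes> c" using c(1) Q.Icarr by simp
      then show "q \<in> ?X" using \<open>q \<in> Q\<close> X_iff by blast
    qed
    moreover have "c \<in> ?X"
    proof -
      have "c = \<zero> \<oplus> \<one> \<otimes> c" using c(1) by simp
      then show ?thesis using X_iff Q.zero_closed by blast
    qed
    ultimately have "?X \<inter> T \<noteq> {}" using max[OF X] c(2) by blast
    then obtain t where "t \<in> ?X" "t \<in> T" by blast
    then show ?thesis unfolding X_iff by auto
  qed
  show "carrier R \<noteq> Q" using Q(2) T(1) by blast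
  fix x y assume xy: "x \<in> carrier R" "y \<in> carrier R" "x \<otimes> y \<in> Q"
  show "x \<in> Q \<or> y \<in> Q"
  proof (rule ccontr)
    assume "\<not> (x \<in> Q \<or> y \<in> Q)"
    then obtain q1 x1 q2 x2 where q: "q1 \<in> Q" "x1 \<in> carrier R" "q1 \<oplus> x1 \<otimes> x \<in> T"
      "q2 \<in> Q" "x2 \<in> carrier R" "q2 \<oplus> x2 \<otimes> y \<in> T"
      using meet xy by meson
    have "(q1 \<oplus> x1 \<otimes> x) \<otimes> (q2 \<oplus> x2 \<otimes> y) =
        q1 \<otimes> (q2 \<oplus> x2 \<otimes> y) \<oplus> (q2 \<otimes> (x1 \<otimes> x) \<oplus> (x1 \<otimes> x2) \<otimes> (x \<otimes> y))"
      using q xy Q.Icarr by algebra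
    also have "\<dots> \<in> Q"
      using q xy Q.Icarr Q.I_l_closed Q.I_r_closed by (intro Q.a_closed) auto
    finally show False using T(2)[OF q(3,6)] Q(2) by blast
  qed
qed

lemma (in cring) prime_ideal_disjoint_from_multiplicative:
  assumes J: "ideal J R" "J \<inter> T = {}"
    and T: "\<one> \<in> T" "\<And>s t. s \<in> T \<Longrightarrow> t \<in> T \<Longrightarrow> s \<otimes> t \<in> T"
  obtains Q where "primeideal Q R" "J \<subseteq> Q" "Q \<inter> T = {}"
proof -
  define Fam where "Fam = {Y. ideal Y R \<and> J \<subseteq> Y \<and> Y \<inter> T = {}}"
  have "\<exists>Q\<in>Fam. \<forall>Y\<in>Fam. Q \<subseteq> Y \<longrightarrow> Y = Q"
  proof (rule subset_Zorn_nonempty)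
    show "Fam \<noteq> {}" unfolding Fam_def using J by blast
  next
    fix C assume C: "C \<noteq> {}" "subset.chain Fam C"
    then have "subset.chain {Y. ideal Y R} C" unfolding pred_on.chain_def Fam_def by auto
    then have "ideal (\<Union>C) R" using chain_Union_is_ideal[of C] C(1) by simp
    moreover have "J \<subseteq> \<Union>C" "\<Union>C \<inter> T = {}"
      using C unfolding pred_on.chain_def Fam_def by blast+
    ultimately show "\<Union>C \<in> Fam" unfolding Fam_def by blast
  qed
  then obtain Q where "Q \<in> Fam" and max: "\<And>Y. Y \<in> Fam \<Longrightarrow> Q \<subseteq> Y \<Longrightarrow> Y = Q" by blast
  then have "ideal Q R" "J \<subseteq> Q" "Q \<inter> T = {}" unfolding Fam_def by auto
  moreover have "primeideal Q R"
  proof (rule ideal_disjoint_maximal_is_prime[OF \<open>ideal Q R\<close> \<open>Q \<inter> T = {}\<close> T])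
    fix Y assume "ideal Y R" "Q \<subseteq> Y" "Y \<inter> T = {}"
    with \<open>J \<subseteq> Q\<close> have "Y \<in> Fam" unfolding Fam_def by blast
    then show "Y = Q" using max \<open>Q \<subseteq> Y\<close> by blast
  qed
  ultimately show thesis using that by blast
qed

lemma minimal_prime_over_pow_witness:
  fixes R :: "'a ring" (structure)
  assumes R: "cring R" and J: "ideal J R" and P: "minimal_prime_over R J P" and a: "a \<in> P"
  shows "\<exists>u \<in> carrier R - P. \<exists>n::nat. u \<otimes> a [^] n \<in> J"
proof (rule ccontr)
  assume no_witness: "\<not> ?thesis"
  interpret cring R by (rule R)
  interpret P: primeideal P R using P unfolding minimal_prime_over_def by blast
  have a_carr: "a \<in> carrier R" using a P.Icarr by blast
  \<comment> \<open>A prime ideal over \<open>J\<close> avoiding \<open>T\<close> lies in \<open>P\<close>, hence equals \<open>P\<close>; but \<open>a \<in> T\<close>.\<close>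
  define T where "T = {u \<otimes> a [^] n | u n::nat. u \<in> carrier R - P}"
  have compl_T: "carrier R - P \<subseteq> T"
  proof
    fix u assume u: "u \<in> carrier R - P"
    then have "u \<otimes> a [^] (0::nat) \<in> T" unfolding T_def by blast
    then show "u \<in> T" using u by simp
  qed
  have T_mult: "s \<otimes> t \<in> T" if "s \<in> T" "t \<in> T" for s t
  proof -
    obtain u n where u: "u \<in> carrier R - P" and s: "s = u \<otimes> a [^] (n::nat)"
      using \<open>s \<in> T\<close> unfolding T_def by blast
    obtain v k where v: "v \<in> carrier R - P" and t: "t = v \<otimes> a [^] (k::nat)"
      using \<open>t \<in> T\<close> unfolding T_def by blast
    have "u \<otimes> v \<in> carrier R - P" using u v P.I_prime m_closed by blast
    then have uv_T: "(u \<otimes> v) \<otimes> a [^] (n + k) \<in> T" unfolding T_def by blast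
    have "s \<otimes> t = (u \<otimes> v) \<otimes> (a [^] n \<otimes> a [^] k)"
      using u v a_carr unfolding s t by (simp add: m_ac)
    also have "\<dots> = (u \<otimes> v) \<otimes> a [^] (n + k)" using a_carr by (simp add: nat_pow_mult)
    finally show ?thesis using uv_T by simp
  qed
  have "\<one> \<in> T" using compl_T P.I_notcarr P.one_imp_carrier one_closed by blast
  moreover have "J \<inter> T = {}" using no_witness unfolding T_def by auto
  ultimately obtain Q where Q: "primeideal Q R" "J \<subseteq> Q" "Q \<inter> T = {}"
    using prime_ideal_disjoint_from_multiplicative[OF J _ _ T_mult] by blast
  have "Q \<subseteq> carrier R" using ideal.Icarr[OF primeideal.axioms(1)[OF Q(1)]] by blast
  then have "Q \<subseteq> P" using compl_T Q(3) by blast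
  then have "Q = P" using P Q unfolding minimal_prime_over_def by blast
  moreover have "a \<in> T"
  proof -
    have "\<one> \<otimes> a [^] (1::nat) \<in> T" unfolding T_def
      using P.I_notcarr P.one_imp_carrier one_closed by blast
    then show ?thesis using a_carr by simp
  qed
  ultimately show False using a Q(3) by blast
qed

section \<open>Annihilators\<close>

text \<open>The constants \<open>ann\<close>, \<open>loc_ring\<close>, \<open>poly_ring\<close>, ... expect the plain record types
  \<open>'a ring\<close> and \<open>('a, 'b) module\<close>, whereas the library locales are stated for record
  schemes; \<open>ring_module\<close> and \<open>plain_cring\<close> fix these types.\<close>

locale ring_module = module R M for R :: "'a ring" (structure) and M :: "('a, 'b) module" (structure)

context ring_module
begin

lemma ann_ideal:
  assumes z: "z \<in> carrier M"
  shows "ideal (ann M R z) R"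
proof (rule idealI_cring)
  show "ann M R z \<subseteq> carrier R" "\<zero> \<in> ann M R z" unfolding ann_def using z by auto
next
  fix a b assume "a \<in> ann M R z" "b \<in> ann M R z"
  then show "a \<oplus> b \<in> ann M R z" using z unfolding ann_def by (simp add: smult_l_distr)
next
  fix a x assume "a \<in> ann M R z" "x \<in> carrier R"
  then show "x \<otimes> a \<in> ann M R z" using z unfolding ann_def by (simp add: smult_assoc1)
qed

lemma smult_left_commute:
  assumes "a \<in> carrier R" "b \<in> carrier R" "x \<in> carrier M"
  shows "a \<odot>\<^bsub>M\<^esub> (b \<odot>\<^bsub>M\<^esub> x) = b \<odot>\<^bsub>M\<^esub> (a \<odot>\<^bsub>M\<^esub> x)"
  using assms by (metis smult_assoc1 m_comm)

lemma ann_subset_ann_smult: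
  assumes "z \<in> carrier M" "b \<in> carrier R"
  shows "ann M R z \<subseteq> ann M R (b \<odot>\<^bsub>M\<^esub> z)"
proof
  fix u assume "u \<in> ann M R z"
  then have "u \<odot>\<^bsub>M\<^esub> (b \<odot>\<^bsub>M\<^esub> z) = b \<odot>\<^bsub>M\<^esub> (u \<odot>\<^bsub>M\<^esub> z)"
    using assms unfolding ann_def by (simp add: smult_left_commute)
  then show "u \<in> ann M R (b \<odot>\<^bsub>M\<^esub> z)" using \<open>u \<in> ann M R z\<close> assms unfolding ann_def by simp
qed

text \<open>\<open>ann M R y \<subseteq> P\<close> says that \<open>y/1 \<noteq> 0\<close> in \<open>M\<^sub>P\<close> (see \<open>mfraction_eq_zero_iff\<close>).\<close>

lemma ex_pow_smult_last_nonzero: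
  assumes "y \<in> carrier M" "a \<in> carrier R" "ann M R y \<subseteq> P"
    and "u \<in> carrier R - P" "u \<otimes> a [^] (n::nat) \<in> ann M R y"
  shows "\<exists>k::nat. ann M R (a [^] k \<odot>\<^bsub>M\<^esub> y) \<subseteq> P \<and> \<not> ann M R (a \<odot>\<^bsub>M\<^esub> (a [^] k \<odot>\<^bsub>M\<^esub> y)) \<subseteq> P"
  using assms(1,3,5)
proof (induction n arbitrary: y)
  case 0
  then show ?case using assms(4) by auto
next
  case (Suc n)
  show ?case
  proof (cases "ann M R (a \<odot>\<^bsub>M\<^esub> y) \<subseteq> P")
    case True
    have "(u \<otimes> a [^] n) \<odot>\<^bsub>M\<^esub> (a \<odot>\<^bsub>M\<^esub> y) = (u \<otimes> a [^] Suc n) \<odot>\<^bsub>M\<^esub> y"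
      using Suc.prems(1) assms(2,4) by (simp add: smult_assoc1 m_assoc)
    then have "u \<otimes> a [^] n \<in> ann M R (a \<odot>\<^bsub>M\<^esub> y)"
      using Suc.prems(1,3) assms(2,4) unfolding ann_def by simp
    moreover have "a \<odot>\<^bsub>M\<^esub> y \<in> carrier M" using Suc.prems(1) assms(2) by simp
    ultimately obtain k :: nat where "ann M R (a [^] k \<odot>\<^bsub>M\<^esub> (a \<odot>\<^bsub>M\<^esub> y)) \<subseteq> P"
      "\<not> ann M R (a \<odot>\<^bsub>M\<^esub> (a [^] k \<odot>\<^bsub>M\<^esub> (a \<odot>\<^bsub>M\<^esub> y))) \<subseteq> P"
      using Suc.IH True by blast
    moreover have "a [^] k \<odot>\<^bsub>M\<^esub> (a \<odot>\<^bsub>M\<^esub> y) = a [^] Suc k \<odot>\<^bsub>M\<^esub> y"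
      using Suc.prems(1) assms(2) by (simp add: smult_assoc1)
    ultimately show ?thesis by (intro exI[of _ "Suc k"]) simp
  next
    case False
    then show ?thesis using Suc.prems(1,2) by (intro exI[of _ 0]) simp
  qed
qed

lemma common_annihilated_multiple:
  assumes z: "z \<in> carrier M" "ann M R z \<subseteq> P" and F: "finite F" "F \<subseteq> carrier R"
    and nil: "\<And>a. a \<in> F \<Longrightarrow> \<exists>u \<in> carrier R - P. \<exists>n::nat. u \<otimes> a [^] n \<in> ann M R z"
  shows "\<exists>y \<in> carrier M. ann M R z \<subseteq> ann M R y \<and> ann M R y \<subseteq> P \<and>
           (\<forall>a \<in> F. \<not> ann M R (a \<odot>\<^bsub>M\<^esub> y) \<subseteq> P)"
  using F nil
proof (induction F rule: finite_induct)
  case empty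
  then show ?case using z by blast
next
  case (insert a F)
  have F: "F \<subseteq> carrier R" and a: "a \<in> carrier R" using insert.prems(1) by auto
  obtain y where y: "y \<in> carrier M" "ann M R z \<subseteq> ann M R y" "ann M R y \<subseteq> P"
    "\<forall>b \<in> F. \<not> ann M R (b \<odot>\<^bsub>M\<^esub> y) \<subseteq> P"
    using insert.IH[OF F insert.prems(2)] by blast
  obtain u n where u: "u \<in> carrier R - P" "u \<otimes> a [^] (n::nat) \<in> ann M R z"
    using insert.prems(2) by blast
  obtain k :: nat where k: "ann M R (a [^] k \<odot>\<^bsub>M\<^esub> y) \<subseteq> P"
    "\<not> ann M R (a \<odot>\<^bsub>M\<^esub> (a [^] k \<odot>\<^bsub>M\<^esub> y)) \<subseteq> P"
    using ex_pow_smult_last_nonzero[OF y(1) a y(3) u(1)] u(2) y(2) by blast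
  let ?y = "a [^] k \<odot>\<^bsub>M\<^esub> y"
  have mono: "ann M R y \<subseteq> ann M R ?y" using ann_subset_ann_smult y(1) a by simp
  have "\<not> ann M R (b \<odot>\<^bsub>M\<^esub> ?y) \<subseteq> P" if "b \<in> F" for b
  proof -
    have "b \<odot>\<^bsub>M\<^esub> ?y = a [^] k \<odot>\<^bsub>M\<^esub> (b \<odot>\<^bsub>M\<^esub> y)"
      using that F y(1) a by (intro smult_left_commute) auto
    moreover have "ann M R (b \<odot>\<^bsub>M\<^esub> y) \<subseteq> ann M R (a [^] k \<odot>\<^bsub>M\<^esub> (b \<odot>\<^bsub>M\<^esub> y))"
      using that F y(1) a by (intro ann_subset_ann_smult) auto
    ultimately have "ann M R (b \<odot>\<^bsub>M\<^esub> y) \<subseteq> ann M R (b \<odot>\<^bsub>M\<^esub> ?y)" by simp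
    then show ?thesis using y(4) that by blast
  qed
  then show ?case using k mono y a by (intro bexI[of _ ?y]) auto
qed

end

section \<open>Polynomials in finitely many variables\<close>

lemma mons_zero: "(\<lambda>_. 0) \<in> mons m"
  unfolding mons_def by auto

lemma mons_diff: "\<alpha> \<in> mons m \<Longrightarrow> (\<lambda>i. \<alpha> i - \<beta> i) \<in> mons m"
  unfolding mons_def by auto

lemma mons_le:
  assumes "\<alpha> \<in> mons m" "\<And>i. \<beta> i \<le> \<alpha> i"
  shows "\<beta> \<in> mons m"
  unfolding mons_def
proof (intro CollectI allI impI)
  fix i assume "m \<le> i"
  then have "\<alpha> i = 0" using assms(1) by (simp add: mons_def)
  then show "\<beta> i = 0" using assms(2)[of i] by simp
qed

lemma divs_iff: "\<alpha> \<in> mons m \<Longrightarrow> \<beta> \<in> divs m \<alpha> \<longleftrightarrow> (\<forall>i. \<beta> i \<le> \<alpha> i)"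
  unfolding divs_def using mons_le by blast

lemma divs_finite: "finite (divs m \<alpha>)"
proof -
  have "inj_on (\<lambda>\<beta>. restrict \<beta> {..<m}) (divs m \<alpha>)"
  proof (rule inj_onI)
    fix x y assume xy: "x \<in> divs m \<alpha>" "y \<in> divs m \<alpha>" "restrict x {..<m} = restrict y {..<m}"
    show "x = y"
    proof
      fix i show "x i = y i"
      proof (cases "i < m")
        case True then show ?thesis using xy(3) by (metis lessThan_iff restrict_apply')
      next
        case False then show ?thesis using xy(1,2) unfolding divs_def mons_def by auto
      qed
    qed
  qed
  moreover have "(\<lambda>\<beta>. restrict \<beta> {..<m}) ` divs m \<alpha> \<subseteq> PiE {..<m} (\<lambda>i. {..\<alpha> i})"
    by (auto simp: PiE_iff divs_def split: if_splits)
  moreover have "finite (PiE {..<m} (\<lambda>i. {..\<alpha> i}))" by (intro finite_PiE) auto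
  ultimately show ?thesis by (meson finite_imageD finite_subset)
qed

lemma (in abelian_monoid) finsum_Sigma:
  assumes "finite A" "\<And>a. a \<in> A \<Longrightarrow> finite (B a)"
    "\<And>a b. a \<in> A \<Longrightarrow> b \<in> B a \<Longrightarrow> f a b \<in> carrier G"
  shows "(\<Oplus>a\<in>A. finsum G (f a) (B a)) = (\<Oplus>p\<in>Sigma A B. f (fst p) (snd p))"
proof -
  have Sigma_UN: "Sigma A B = (\<Union>a\<in>A. Pair a ` B a)" by auto
  have "(\<Oplus>p\<in>Sigma A B. f (fst p) (snd p)) = (\<Oplus>a\<in>A. \<Oplus>p\<in>Pair a ` B a. f (fst p) (snd p))"
    unfolding Sigma_UN using assms by (intro add.finprod_UN_disjoint) (auto simp: pairwise_def disjnt_def)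
  also have "\<dots> = (\<Oplus>a\<in>A. finsum G (f a) (B a))"
  proof (rule finsum_cong'[OF refl])
    fix a assume "a \<in> A"
    then show "(\<Oplus>p\<in>Pair a ` B a. f (fst p) (snd p)) = finsum G (f a) (B a)"
      using assms(3) by (subst finsum_reindex) (auto simp: inj_on_def)
  qed (use assms(3) in \<open>auto intro!: finsum_closed\<close>)
  finally show ?thesis by simp
qed

lemma divs_reflect:
  assumes "\<alpha> \<in> mons m" "\<beta> \<in> divs m \<alpha>"
  shows "(\<lambda>i. \<alpha> i - \<beta> i) \<in> divs m \<alpha>" "(\<lambda>i. \<alpha> i - (\<alpha> i - \<beta> i)) = \<beta>"
  using assms by (auto simp: divs_iff)

lemma (in abelian_monoid) finsum_divs_reflect:
  assumes "\<alpha> \<in> mons m" "\<And>\<beta> \<gamma>. F \<beta> \<gamma> \<in> carrier G"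
  shows "(\<Oplus>\<beta>\<in>divs m \<alpha>. F \<beta> (\<lambda>i. \<alpha> i - \<beta> i)) = (\<Oplus>\<beta>\<in>divs m \<alpha>. F (\<lambda>i. \<alpha> i - \<beta> i) \<beta>)"
proof -
  define \<psi> where "\<psi> \<beta> = (\<lambda>i. \<alpha> i - \<beta> i)" for \<beta> :: "nat \<Rightarrow> nat"
  have \<psi>: "\<psi> \<beta> \<in> divs m \<alpha>" "\<psi> (\<psi> \<beta>) = \<beta>" if "\<beta> \<in> divs m \<alpha>" for \<beta>
    using divs_reflect[OF assms(1) that] unfolding \<psi>_def by auto
  then have "inj_on \<psi> (divs m \<alpha>)" by (metis inj_onI)
  moreover have "\<psi> ` divs m \<alpha> = divs m \<alpha>" using \<psi> by (metis image_subsetI subsetI subset_antisym imageI)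
  ultimately have "(\<Oplus>\<beta>\<in>divs m \<alpha>. F \<beta> (\<psi> \<beta>)) = (\<Oplus>\<beta>\<in>divs m \<alpha>. F (\<psi> \<beta>) (\<psi> (\<psi> \<beta>)))"
    using finsum_reindex[of "\<lambda>\<beta>. F \<beta> (\<psi> \<beta>)" \<psi> "divs m \<alpha>"] assms(2) by auto
  also have "\<dots> = (\<Oplus>\<beta>\<in>divs m \<alpha>. F (\<psi> \<beta>) \<beta>)"
    using \<psi> assms(2) by (intro finsum_cong') auto
  finally show ?thesis unfolding \<psi>_def .
qed

lemma (in abelian_monoid) finsum_divs_nested:
  assumes "\<alpha> \<in> mons m" "\<And>x y z. F x y z \<in> carrier G"
  shows "(\<Oplus>\<beta>\<in>divs m \<alpha>. \<Oplus>\<gamma>\<in>divs m \<beta>. F \<gamma> (\<lambda>i. \<beta> i - \<gamma> i) (\<lambda>i. \<alpha> i - \<beta> i)) =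
    (\<Oplus>\<gamma>\<in>divs m \<alpha>. \<Oplus>\<delta>\<in>divs m (\<lambda>i. \<alpha> i - \<gamma> i). F \<gamma> \<delta> (\<lambda>i. \<alpha> i - \<gamma> i - \<delta> i))"
    (is "?lhs = ?rhs")
proof -
  define S1 where "S1 = Sigma (divs m \<alpha>) (divs m)"
  define S2 where "S2 = Sigma (divs m \<alpha>) (\<lambda>\<gamma>. divs m (\<lambda>i. \<alpha> i - \<gamma> i))"
  define \<phi> :: "(nat \<Rightarrow> nat) \<times> (nat \<Rightarrow> nat) \<Rightarrow> (nat \<Rightarrow> nat) \<times> (nat \<Rightarrow> nat)"
    where "\<phi> q = (\<lambda>i. fst q i + snd q i, fst q)" for q
  define F1 where "F1 p = F (snd p) (\<lambda>i. fst p i - snd p i) (\<lambda>i. \<alpha> i - fst p i)" for p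
  have "S1 = \<phi> ` S2"
  proof
    show "\<phi> ` S2 \<subseteq> S1"
    proof
      fix p assume "p \<in> \<phi> ` S2"
      then obtain \<gamma> \<delta> where p: "p = \<phi> (\<gamma>, \<delta>)" "\<gamma> \<in> divs m \<alpha>" "\<delta> \<in> divs m (\<lambda>i. \<alpha> i - \<gamma> i)"
        unfolding S2_def by auto
      then have "\<gamma> i + \<delta> i \<le> \<alpha> i" for i unfolding divs_def by (auto dest!: spec[of _ i])
      then show "p \<in> S1" using p unfolding S1_def \<phi>_def divs_def mons_def by auto
    qed
  next
    show "S1 \<subseteq> \<phi> ` S2"
    proof
      fix p assume "p \<in> S1"
      then obtain \<beta> \<gamma> where p: "p = (\<beta>, \<gamma>)" "\<beta> \<in> divs m \<alpha>" "\<gamma> \<in> divs m \<beta>"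
        unfolding S1_def by auto
      then have "p = \<phi> (\<gamma>, \<lambda>i. \<beta> i - \<gamma> i)" unfolding \<phi>_def divs_def by (auto simp: fun_eq_iff)
      moreover have "(\<gamma>, \<lambda>i. \<beta> i - \<gamma> i) \<in> S2"
        using p unfolding S2_def divs_def mons_def by (auto intro: le_trans diff_le_mono)
      ultimately show "p \<in> \<phi> ` S2" by blast
    qed
  qed
  have "?lhs = finsum G F1 S1"
    unfolding S1_def F1_def by (subst finsum_Sigma) (auto simp: divs_finite assms(2))
  also have "\<dots> = finsum G (\<lambda>q. F1 (\<phi> q)) S2"
    unfolding \<open>S1 = \<phi> ` S2\<close>
    by (rule finsum_reindex) (auto simp: F1_def assms(2) \<phi>_def inj_on_def fun_eq_iff)
  also have "(\<lambda>q. F1 (\<phi> q)) = (\<lambda>q. F (fst q) (snd q) (\<lambda>i. \<alpha> i - fst q i - snd q i))"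
    unfolding F1_def \<phi>_def by (simp add: fun_eq_iff diff_diff_add)
  also have "finsum G \<dots> S2 = ?rhs"
    unfolding S2_def by (subst finsum_Sigma) (auto simp: divs_finite assms(2))
  finally show ?thesis .
qed

locale plain_cring = cring R for R :: "'a ring" (structure)

context plain_cring
begin

lemma poly_ring_carrier: "f \<in> carrier (poly_ring R m) \<longleftrightarrow>
  (\<forall>\<alpha>. f \<alpha> \<in> carrier R) \<and> (\<forall>\<alpha>. \<alpha> \<notin> mons m \<longrightarrow> f \<alpha> = \<zero>) \<and> finite {\<alpha>. f \<alpha> \<noteq> \<zero>}"
  unfolding poly_ring_def by simp

lemma poly_ring_mult: "f \<otimes>\<^bsub>poly_ring R m\<^esub> g = (\<lambda>\<alpha>. if \<alpha> \<in> mons m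
    then \<Oplus>\<beta>\<in>divs m \<alpha>. f \<beta> \<otimes> g (\<lambda>i. \<alpha> i - \<beta> i) else \<zero>)"
  unfolding poly_ring_def by simp

lemma poly_ring_add: "f \<oplus>\<^bsub>poly_ring R m\<^esub> g = (\<lambda>\<alpha>. f \<alpha> \<oplus> g \<alpha>)"
  unfolding poly_ring_def by simp

lemma poly_ring_zero: "\<zero>\<^bsub>poly_ring R m\<^esub> = (\<lambda>\<alpha>. \<zero>)"
  unfolding poly_ring_def by simp

lemma poly_ring_one: "\<one>\<^bsub>poly_ring R m\<^esub> = const_poly R \<one>"
  unfolding poly_ring_def const_poly_def by simp

lemma poly_coeff_closed: "f \<in> carrier (poly_ring R m) \<Longrightarrow> f \<alpha> \<in> carrier R"
  by (simp add: poly_ring_carrier)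

lemma poly_coeff_outside: "f \<in> carrier (poly_ring R m) \<Longrightarrow> \<alpha> \<notin> mons m \<Longrightarrow> f \<alpha> = \<zero>"
  by (simp add: poly_ring_carrier)

lemma poly_finite_support: "f \<in> carrier (poly_ring R m) \<Longrightarrow> finite {\<alpha>. f \<alpha> \<noteq> \<zero>}"
  by (simp add: poly_ring_carrier)

lemma const_poly_closed: "c \<in> carrier R \<Longrightarrow> const_poly R c \<in> carrier (poly_ring R m)"
proof -
  assume c: "c \<in> carrier R"
  have "{\<alpha>. const_poly R c \<alpha> \<noteq> \<zero>} \<subseteq> {\<lambda>_. 0}" unfolding const_poly_def by auto
  then have "finite {\<alpha>. const_poly R c \<alpha> \<noteq> \<zero>}" by (rule finite_subset) simp
  then show ?thesis using c mons_zero unfolding poly_ring_carrier const_poly_def by auto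
qed

lemma poly_ring_add_closed:
  assumes f: "f \<in> carrier (poly_ring R m)" and g: "g \<in> carrier (poly_ring R m)"
  shows "f \<oplus>\<^bsub>poly_ring R m\<^esub> g \<in> carrier (poly_ring R m)"
proof -
  have "{\<alpha>. f \<alpha> \<oplus> g \<alpha> \<noteq> \<zero>} \<subseteq> {\<alpha>. f \<alpha> \<noteq> \<zero>} \<union> {\<alpha>. g \<alpha> \<noteq> \<zero>}" by auto
  then have "finite {\<alpha>. f \<alpha> \<oplus> g \<alpha> \<noteq> \<zero>}"
    using poly_finite_support[OF f] poly_finite_support[OF g] by (simp add: finite_subset)
  then show ?thesis using f g unfolding poly_ring_add by (simp add: poly_ring_carrier)
qed

lemma poly_ring_mult_closed:
  assumes f: "f \<in> carrier (poly_ring R m)" and g: "g \<in> carrier (poly_ring R m)"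
  shows "f \<otimes>\<^bsub>poly_ring R m\<^esub> g \<in> carrier (poly_ring R m)"
proof -
  let ?h = "f \<otimes>\<^bsub>poly_ring R m\<^esub> g"
  have val: "?h \<alpha> \<in> carrier R" for \<alpha>
    unfolding poly_ring_mult using poly_coeff_closed[OF f] poly_coeff_closed[OF g] by (auto intro!: finsum_closed)
  have out: "?h \<alpha> = \<zero>" if "\<alpha> \<notin> mons m" for \<alpha> unfolding poly_ring_mult using that by simp
  have "{\<alpha>. ?h \<alpha> \<noteq> \<zero>} \<subseteq> (\<lambda>(\<beta>, \<gamma>). (\<lambda>i. \<beta> i + \<gamma> i)) ` ({\<beta>. f \<beta> \<noteq> \<zero>} \<times> {\<gamma>. g \<gamma> \<noteq> \<zero>})"
  proof
    fix \<alpha> assume "\<alpha> \<in> {\<alpha>. ?h \<alpha> \<noteq> \<zero>}"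
    then have ne: "?h \<alpha> \<noteq> \<zero>" by simp
    then have am: "\<alpha> \<in> mons m" using out by blast
    have "\<exists>\<beta>\<in>divs m \<alpha>. f \<beta> \<otimes> g (\<lambda>i. \<alpha> i - \<beta> i) \<noteq> \<zero>"
    proof (rule ccontr)
      assume "\<not> ?thesis"
      then have "finsum R (\<lambda>\<beta>. f \<beta> \<otimes> g (\<lambda>i. \<alpha> i - \<beta> i)) (divs m \<alpha>) = \<zero>"
        by (intro add.finprod_one_eqI) auto
      then show False using ne am unfolding poly_ring_mult by simp
    qed
    then obtain \<beta> where b: "\<beta> \<in> divs m \<alpha>" "f \<beta> \<otimes> g (\<lambda>i. \<alpha> i - \<beta> i) \<noteq> \<zero>" by blast
    then have "f \<beta> \<noteq> \<zero>" "g (\<lambda>i. \<alpha> i - \<beta> i) \<noteq> \<zero>"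
      using poly_coeff_closed[OF f] poly_coeff_closed[OF g] by auto
    moreover have "\<alpha> = (\<lambda>i. \<beta> i + (\<alpha> i - \<beta> i))" using b(1) unfolding divs_def by auto
    ultimately show "\<alpha> \<in> (\<lambda>(\<beta>, \<gamma>). (\<lambda>i. \<beta> i + \<gamma> i)) ` ({\<beta>. f \<beta> \<noteq> \<zero>} \<times> {\<gamma>. g \<gamma> \<noteq> \<zero>})"
      by (intro image_eqI[of _ _ "(\<beta>, \<lambda>i. \<alpha> i - \<beta> i)"]) auto
  qed
  moreover have "finite ((\<lambda>(\<beta>, \<gamma>). (\<lambda>i. \<beta> i + \<gamma> i)) ` ({\<beta>. f \<beta> \<noteq> \<zero>} \<times> {\<gamma>. g \<gamma> \<noteq> \<zero>}))"
    using poly_finite_support[OF f] poly_finite_support[OF g] by auto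
  ultimately have "finite {\<alpha>. ?h \<alpha> \<noteq> \<zero>}" by (rule finite_subset)
  then show ?thesis using val out by (simp add: poly_ring_carrier)
qed

lemma poly_ring_mult_assoc:
  assumes f: "f \<in> carrier (poly_ring R m)" and g: "g \<in> carrier (poly_ring R m)"
    and h: "h \<in> carrier (poly_ring R m)"
  shows "f \<otimes>\<^bsub>poly_ring R m\<^esub> g \<otimes>\<^bsub>poly_ring R m\<^esub> h = f \<otimes>\<^bsub>poly_ring R m\<^esub> (g \<otimes>\<^bsub>poly_ring R m\<^esub> h)"
proof
  fix \<alpha>
  have fc: "\<And>x. f x \<in> carrier R" and gc: "\<And>x. g x \<in> carrier R" and hc: "\<And>x. h x \<in> carrier R"
    using f g h by (auto simp: poly_coeff_closed)
  have dm: "\<beta> \<in> mons m" if "\<beta> \<in> divs m \<gamma>" for \<beta> \<gamma> using that unfolding divs_def by auto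
  show "(f \<otimes>\<^bsub>poly_ring R m\<^esub> g \<otimes>\<^bsub>poly_ring R m\<^esub> h) \<alpha> = (f \<otimes>\<^bsub>poly_ring R m\<^esub> (g \<otimes>\<^bsub>poly_ring R m\<^esub> h)) \<alpha>"
  proof (cases "\<alpha> \<in> mons m")
    case False then show ?thesis by (simp add: poly_ring_mult)
  next
    case True
    have "(f \<otimes>\<^bsub>poly_ring R m\<^esub> g \<otimes>\<^bsub>poly_ring R m\<^esub> h) \<alpha> =
      (\<Oplus>\<beta>\<in>divs m \<alpha>. (\<Oplus>\<gamma>\<in>divs m \<beta>. f \<gamma> \<otimes> g (\<lambda>i. \<beta> i - \<gamma> i)) \<otimes> h (\<lambda>i. \<alpha> i - \<beta> i))"
      using True unfolding poly_ring_mult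
      by (simp, intro finsum_cong') (auto simp: dm fc gc hc intro!: finsum_closed)
    also have "\<dots> = (\<Oplus>\<beta>\<in>divs m \<alpha>. \<Oplus>\<gamma>\<in>divs m \<beta>. f \<gamma> \<otimes> g (\<lambda>i. \<beta> i - \<gamma> i) \<otimes> h (\<lambda>i. \<alpha> i - \<beta> i))"
      by (intro finsum_cong' refl) (auto simp: finsum_ldistr divs_finite fc gc hc intro!: finsum_closed)
    also have "\<dots> = (\<Oplus>\<gamma>\<in>divs m \<alpha>. \<Oplus>\<delta>\<in>divs m (\<lambda>i. \<alpha> i - \<gamma> i). f \<gamma> \<otimes> g \<delta> \<otimes> h (\<lambda>i. \<alpha> i - \<gamma> i - \<delta> i))"
      using True by (rule finsum_divs_nested) (simp add: fc gc hc)
    also have "\<dots> = (\<Oplus>\<gamma>\<in>divs m \<alpha>. f \<gamma> \<otimes> (\<Oplus>\<delta>\<in>divs m (\<lambda>i. \<alpha> i - \<gamma> i). g \<delta> \<otimes> h (\<lambda>i. \<alpha> i - \<gamma> i - \<delta> i)))"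
      by (intro finsum_cong' refl)
        (auto simp: finsum_rdistr divs_finite m_assoc fc gc hc intro!: finsum_closed)
    also have "\<dots> = (f \<otimes>\<^bsub>poly_ring R m\<^esub> (g \<otimes>\<^bsub>poly_ring R m\<^esub> h)) \<alpha>"
      using True by (simp add: poly_ring_mult mons_diff)
    finally show ?thesis .
  qed
qed

lemma poly_ring_mult_comm:
  assumes f: "f \<in> carrier (poly_ring R m)" and g: "g \<in> carrier (poly_ring R m)"
  shows "f \<otimes>\<^bsub>poly_ring R m\<^esub> g = g \<otimes>\<^bsub>poly_ring R m\<^esub> f"
proof
  fix \<alpha>
  have fc: "\<And>x. f x \<in> carrier R" and gc: "\<And>x. g x \<in> carrier R"
    using f g by (auto simp: poly_coeff_closed)
  show "(f \<otimes>\<^bsub>poly_ring R m\<^esub> g) \<alpha> = (g \<otimes>\<^bsub>poly_ring R m\<^esub> f) \<alpha>"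
  proof (cases "\<alpha> \<in> mons m")
    case False then show ?thesis by (simp add: poly_ring_mult)
  next
    case True
    have "(\<Oplus>\<beta>\<in>divs m \<alpha>. f \<beta> \<otimes> g (\<lambda>i. \<alpha> i - \<beta> i)) = (\<Oplus>\<beta>\<in>divs m \<alpha>. f (\<lambda>i. \<alpha> i - \<beta> i) \<otimes> g \<beta>)"
      using True by (rule finsum_divs_reflect) (simp add: fc gc)
    also have "\<dots> = (\<Oplus>\<beta>\<in>divs m \<alpha>. g \<beta> \<otimes> f (\<lambda>i. \<alpha> i - \<beta> i))"
      by (intro finsum_cong' refl) (auto simp: fc gc m_comm)
    finally show ?thesis using True by (simp add: poly_ring_mult)
  qed
qed

lemma poly_ring_l_one:
  assumes g: "g \<in> carrier (poly_ring R m)"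
  shows "\<one>\<^bsub>poly_ring R m\<^esub> \<otimes>\<^bsub>poly_ring R m\<^esub> g = g"
proof
  fix \<alpha>
  show "(\<one>\<^bsub>poly_ring R m\<^esub> \<otimes>\<^bsub>poly_ring R m\<^esub> g) \<alpha> = g \<alpha>"
  proof (cases "\<alpha> \<in> mons m")
    case False then show ?thesis using poly_coeff_outside[OF g False] by (simp add: poly_ring_mult)
  next
    case True
    have gc: "\<And>x. g x \<in> carrier R" using g by (simp add: poly_coeff_closed)
    have "(\<one>\<^bsub>poly_ring R m\<^esub> \<otimes>\<^bsub>poly_ring R m\<^esub> g) \<alpha> =
       (\<Oplus>\<beta>\<in>divs m \<alpha>. if (\<lambda>_. 0) = \<beta> then g (\<lambda>i. \<alpha> i - \<beta> i) else \<zero>)"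
      using True unfolding poly_ring_mult poly_ring_one const_poly_def
      by (simp, intro finsum_cong') (auto simp: gc)
    also have "\<dots> = g (\<lambda>i. \<alpha> i - 0)"
      using True mons_zero by (intro finsum_singleton divs_finite) (auto simp: gc divs_iff)
    finally show ?thesis by simp
  qed
qed

lemma poly_ring_l_distr:
  assumes f: "f \<in> carrier (poly_ring R m)" and g: "g \<in> carrier (poly_ring R m)"
    and h: "h \<in> carrier (poly_ring R m)"
  shows "(f \<oplus>\<^bsub>poly_ring R m\<^esub> g) \<otimes>\<^bsub>poly_ring R m\<^esub> h =
    f \<otimes>\<^bsub>poly_ring R m\<^esub> h \<oplus>\<^bsub>poly_ring R m\<^esub> g \<otimes>\<^bsub>poly_ring R m\<^esub> h"
proof
  fix \<alpha>
  have fc: "\<And>x. f x \<in> carrier R" and gc: "\<And>x. g x \<in> carrier R" and hc: "\<And>x. h x \<in> carrier R"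
    using f g h by (auto simp: poly_coeff_closed)
  have "(\<Oplus>\<beta>\<in>divs m \<alpha>. (f \<beta> \<oplus> g \<beta>) \<otimes> h (\<lambda>i. \<alpha> i - \<beta> i)) =
      (\<Oplus>\<beta>\<in>divs m \<alpha>. f \<beta> \<otimes> h (\<lambda>i. \<alpha> i - \<beta> i)) \<oplus> (\<Oplus>\<beta>\<in>divs m \<alpha>. g \<beta> \<otimes> h (\<lambda>i. \<alpha> i - \<beta> i))"
    by (simp add: l_distr finsum_addf fc gc hc)
  then show "((f \<oplus>\<^bsub>poly_ring R m\<^esub> g) \<otimes>\<^bsub>poly_ring R m\<^esub> h) \<alpha> =
    (f \<otimes>\<^bsub>poly_ring R m\<^esub> h \<oplus>\<^bsub>poly_ring R m\<^esub> g \<otimes>\<^bsub>poly_ring R m\<^esub> h) \<alpha>"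
    by (simp add: poly_ring_mult poly_ring_add)
qed

lemma poly_ring_zero_closed: "\<zero>\<^bsub>poly_ring R m\<^esub> \<in> carrier (poly_ring R m)"
  unfolding poly_ring_zero poly_ring_carrier by simp

lemma abelian_group_poly_ring: "abelian_group (poly_ring R m)"
proof (rule abelian_groupI)
  fix x assume x: "x \<in> carrier (poly_ring R m)"
  then have "(\<lambda>\<alpha>. \<ominus> x \<alpha>) \<in> carrier (poly_ring R m)"
    by (auto simp: poly_ring_carrier elim!: rev_finite_subset)
  moreover have "(\<lambda>\<alpha>. \<ominus> x \<alpha>) \<oplus>\<^bsub>poly_ring R m\<^esub> x = \<zero>\<^bsub>poly_ring R m\<^esub>"
    using x by (simp add: poly_ring_add poly_ring_zero poly_coeff_closed l_neg)
  ultimately show "\<exists>y\<in>carrier (poly_ring R m). y \<oplus>\<^bsub>poly_ring R m\<^esub> x = \<zero>\<^bsub>poly_ring R m\<^esub>" by blast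
qed (fact poly_ring_add_closed poly_ring_zero_closed |
  simp add: poly_ring_add poly_ring_zero poly_coeff_closed a_ac)+

lemma comm_monoid_poly_ring: "comm_monoid (poly_ring R m)"
proof (rule comm_monoidI)
  show "\<one>\<^bsub>poly_ring R m\<^esub> \<in> carrier (poly_ring R m)"
    unfolding poly_ring_one by (rule const_poly_closed) simp
qed (fact poly_ring_mult_closed poly_ring_mult_assoc poly_ring_l_one poly_ring_mult_comm)+

lemma cring_poly_ring: "cring (poly_ring R m)"
  by (rule cringI[OF abelian_group_poly_ring comm_monoid_poly_ring poly_ring_l_distr])

lemma ideal_poly_coeffs_in:
  assumes J: "ideal J R"
  shows "ideal {f \<in> carrier (poly_ring R m). \<forall>\<alpha>. f \<alpha> \<in> J} (poly_ring R m)"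
proof (rule cring.idealI_cring[OF cring_poly_ring])
  interpret J: ideal J R by (rule J)
  show "\<zero>\<^bsub>poly_ring R m\<^esub> \<in> {f \<in> carrier (poly_ring R m). \<forall>\<alpha>. f \<alpha> \<in> J}"
    using poly_ring_zero_closed by (simp add: poly_ring_zero)
  fix f g assume f: "f \<in> {f \<in> carrier (poly_ring R m). \<forall>\<alpha>. f \<alpha> \<in> J}"
  {
    assume "g \<in> {f \<in> carrier (poly_ring R m). \<forall>\<alpha>. f \<alpha> \<in> J}"
    then show "f \<oplus>\<^bsub>poly_ring R m\<^esub> g \<in> {f \<in> carrier (poly_ring R m). \<forall>\<alpha>. f \<alpha> \<in> J}"
      using f poly_ring_add_closed by (simp add: poly_ring_add)
  next
    assume g: "g \<in> carrier (poly_ring R m)"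
    have "\<And>\<beta>. g \<beta> \<in> carrier R" using g by (rule poly_coeff_closed)
    then have "(g \<otimes>\<^bsub>poly_ring R m\<^esub> f) \<alpha> \<in> J" for \<alpha>
      using f unfolding poly_ring_mult by (auto intro!: finsum_in_ideal[OF J divs_finite] J.I_l_closed)
    then show "g \<otimes>\<^bsub>poly_ring R m\<^esub> f \<in> {f \<in> carrier (poly_ring R m). \<forall>\<alpha>. f \<alpha> \<in> J}"
      using f g poly_ring_mult_closed by auto
  }
qed auto

lemma genideal_const_poly_subset:
  assumes "ideal J R" "J0 \<subseteq> J"
  shows "genideal (poly_ring R m) (const_poly R ` J0) \<subseteq> {f \<in> carrier (poly_ring R m). \<forall>\<alpha>. f \<alpha> \<in> J}"
proof (rule ring.genideal_minimal[OF cring.axioms(1)[OF cring_poly_ring] ideal_poly_coeffs_in[OF assms(1)]])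
  interpret J: ideal J R by (rule assms(1))
  show "const_poly R ` J0 \<subseteq> {f \<in> carrier (poly_ring R m). \<forall>\<alpha>. f \<alpha> \<in> J}"
  proof (intro image_subsetI CollectI conjI allI)
    fix c \<alpha> assume "c \<in> J0"
    then show "const_poly R c \<in> carrier (poly_ring R m)" using assms(2) J.Icarr const_poly_closed by blast
    show "const_poly R c \<alpha> \<in> J" using \<open>c \<in> J0\<close> assms(2) unfolding const_poly_def by auto
  qed
qed

end

section \<open>Grade\<close>

definition const_poly_mod :: "('c, 'd) module \<Rightarrow> 'd \<Rightarrow> (nat \<Rightarrow> nat) \<Rightarrow> 'd" where
  "const_poly_mod N w = (\<lambda>\<alpha>. if \<alpha> = (\<lambda>_. 0) then w else \<zero>\<^bsub>N\<^esub>)"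

lemma poly_mod_zero_closed:
  "\<zero>\<^bsub>N\<^esub> \<in> carrier N \<Longrightarrow> \<zero>\<^bsub>poly_mod A N m\<^esub> \<in> carrier (poly_mod A N m)"
  unfolding poly_mod_def by simp

lemma const_poly_mod_closed:
  assumes "w \<in> carrier N" "\<zero>\<^bsub>N\<^esub> \<in> carrier N"
  shows "const_poly_mod N w \<in> carrier (poly_mod A N m)"
proof -
  have "{\<alpha>. const_poly_mod N w \<alpha> \<noteq> \<zero>\<^bsub>N\<^esub>} \<subseteq> {\<lambda>_. 0}" unfolding const_poly_mod_def by auto
  then show ?thesis using assms mons_zero unfolding poly_mod_def const_poly_mod_def
    by (auto intro: finite_subset)
qed

lemma const_poly_mod_eq_zero_iff:
  "const_poly_mod N w = \<zero>\<^bsub>poly_mod A N m\<^esub> \<longleftrightarrow> w = \<zero>\<^bsub>N\<^esub>"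
  unfolding poly_mod_def const_poly_mod_def by (auto dest: fun_cong[of _ _ "\<lambda>_. 0"])

lemma smult_const_poly_mod_eq_zero:
  assumes "abelian_monoid N" "\<And>\<beta>. x \<beta> \<odot>\<^bsub>N\<^esub> w = \<zero>\<^bsub>N\<^esub>" "\<And>\<beta>. x \<beta> \<odot>\<^bsub>N\<^esub> \<zero>\<^bsub>N\<^esub> = \<zero>\<^bsub>N\<^esub>"
  shows "x \<odot>\<^bsub>poly_mod A N m\<^esub> const_poly_mod N w = \<zero>\<^bsub>poly_mod A N m\<^esub>"
proof -
  have "x \<beta> \<odot>\<^bsub>N\<^esub> const_poly_mod N w \<gamma> = \<zero>\<^bsub>N\<^esub>" for \<beta> \<gamma>
    using assms(2,3) unfolding const_poly_mod_def by simp
  then have "(\<Oplus>\<^bsub>N\<^esub>\<beta>\<in>divs m \<alpha>. x \<beta> \<odot>\<^bsub>N\<^esub> const_poly_mod N w (\<lambda>i. \<alpha> i - \<beta> i)) = \<zero>\<^bsub>N\<^esub>" for \<alpha>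
    using abelian_monoid.finsum_zero[OF assms(1)] by simp
  then show ?thesis unfolding poly_mod_def module.select_convs ring.select_convs by (simp add: fun_eq_iff)
qed

lemma grade_eq_0_if_zero_divisors:
  assumes "\<zero>\<^bsub>N\<^esub> \<in> carrier N"
    and "\<And>x. x \<in> I \<Longrightarrow> \<exists>v \<in> carrier N. v \<noteq> \<zero>\<^bsub>N\<^esub> \<and> x \<odot>\<^bsub>N\<^esub> v = \<zero>\<^bsub>N\<^esub>"
  shows "grade A I N = 0"
proof -
  have no_seq_elem: "(x # xs) \<notin> {xs. reg_seq A N xs \<and> set xs \<subseteq> I}" for x xs
  proof
    assume "x # xs \<in> {xs. reg_seq A N xs \<and> set xs \<subseteq> I}"
    then have reg: "reg_seq A N (x # xs)" and "x \<in> I" by auto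
    then obtain v where v: "v \<in> carrier N" "v \<noteq> \<zero>\<^bsub>N\<^esub>" "x \<odot>\<^bsub>N\<^esub> v = \<zero>\<^bsub>N\<^esub>" using assms(2) by blast
    have empty_submod: "seq_submod N [] = {\<zero>\<^bsub>N\<^esub>}"
      using assms(1) unfolding seq_submod_def finsum_def finprod_def by simp
    from reg v(1) have "x \<odot>\<^bsub>N\<^esub> v \<in> seq_submod N [] \<longrightarrow> v \<in> seq_submod N []"
      unfolding reg_seq_def by (metis length_greater_0_conv list.distinct(1) nth_Cons_0 take0)
    then show False using v empty_submod by simp
  qed
  have "{enat (length xs) | xs. reg_seq A N xs \<and> set xs \<subseteq> I} = {0}"
  proof -
    have "reg_seq A N []" unfolding reg_seq_def by simp
    moreover have "xs = []" if "reg_seq A N xs" "set xs \<subseteq> I" for xs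
      using no_seq_elem[of "hd xs" "tl xs"] that by (cases xs) auto
    ultimately show ?thesis by (auto simp: zero_enat_def)
  qed
  then show ?thesis unfolding grade_def by simp
qed

section \<open>Localization at a prime\<close>

locale ring_at_prime = primeideal P R for P :: "'a set" and R :: "'a ring" (structure)

context ring_at_prime
begin

abbreviation "S \<equiv> carrier R - P"
abbreviation "frac_rel \<equiv> loc_rel R S"
abbreviation "fraction a s \<equiv> frac_rel `` {(a, s)}"
abbreviation "R\<^sub>P \<equiv> loc_ring R P"

lemma P_carrier: "P \<subseteq> carrier R" using a_subset by blast

lemma S_one: "\<one> \<in> S" using I_notcarr one_imp_carrier by blast

lemma mult_notin_prime [simp]:
  "s \<in> carrier R \<Longrightarrow> s \<notin> P \<Longrightarrow> t \<in> carrier R \<Longrightarrow> t \<notin> P \<Longrightarrow> s \<otimes> t \<notin> P"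
  using I_prime by auto

lemma S_mult: "s \<in> S \<Longrightarrow> t \<in> S \<Longrightarrow> s \<otimes> t \<in> S" by simp

lemma loc_rel_iff: "((a, s), (b, t)) \<in> frac_rel \<longleftrightarrow>
   a \<in> carrier R \<and> s \<in> S \<and> b \<in> carrier R \<and> t \<in> S \<and>
   (\<exists>u \<in> S. u \<otimes> (t \<otimes> a) = u \<otimes> (s \<otimes> b))"
proof -
  have "u \<otimes> (t \<otimes> a \<ominus> s \<otimes> b) = \<zero> \<longleftrightarrow> u \<otimes> (t \<otimes> a) = u \<otimes> (s \<otimes> b)"
    if "a \<in> carrier R" "b \<in> carrier R" "s \<in> carrier R" "t \<in> carrier R" "u \<in> carrier R" for u a b s t
  proof -
    have "u \<otimes> (t \<otimes> a \<ominus> s \<otimes> b) = u \<otimes> (t \<otimes> a) \<ominus> u \<otimes> (s \<otimes> b)"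
      using that by (simp add: minus_eq r_distr r_minus)
    then show ?thesis using that by (simp add: minus_eq_zero_iff)
  qed
  then show ?thesis unfolding loc_rel_def by auto
qed

lemma loc_rel_trans:
  assumes "((a, s), (b, t)) \<in> frac_rel" "((b, t), (c, w)) \<in> frac_rel"
  shows "((a, s), (c, w)) \<in> frac_rel"
proof -
  from assms(1) obtain u where u: "u \<in> S" "u \<otimes> (t \<otimes> a) = u \<otimes> (s \<otimes> b)"
    and c1: "a \<in> carrier R" "s \<in> S" "b \<in> carrier R" "t \<in> S"
    unfolding loc_rel_iff by blast
  from assms(2) obtain v where v: "v \<in> S" "v \<otimes> (w \<otimes> b) = v \<otimes> (t \<otimes> c)"
    and c2: "c \<in> carrier R" "w \<in> S"
    unfolding loc_rel_iff by blast
  have cs: "a \<in> carrier R" "b \<in> carrier R" "c \<in> carrier R" "s \<in> carrier R" "t \<in> carrier R"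
    "w \<in> carrier R" "u \<in> carrier R" "v \<in> carrier R" using c1 c2 u v by auto
  have "(u \<otimes> v \<otimes> t) \<otimes> (w \<otimes> a) = (v \<otimes> w) \<otimes> (u \<otimes> (t \<otimes> a))" using cs by (simp add: m_ac)
  also have "\<dots> = (v \<otimes> w) \<otimes> (u \<otimes> (s \<otimes> b))" using u by simp
  also have "\<dots> = (u \<otimes> s) \<otimes> (v \<otimes> (w \<otimes> b))" using cs by (simp add: m_ac)
  also have "\<dots> = (u \<otimes> s) \<otimes> (v \<otimes> (t \<otimes> c))" using v by simp
  also have "\<dots> = (u \<otimes> v \<otimes> t) \<otimes> (s \<otimes> c)" using cs by (simp add: m_ac)
  finally have "(u \<otimes> v \<otimes> t) \<otimes> (w \<otimes> a) = (u \<otimes> v \<otimes> t) \<otimes> (s \<otimes> c)" .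
  moreover have "u \<otimes> v \<otimes> t \<in> S" using S_mult u v c1 by auto
  ultimately show ?thesis unfolding loc_rel_iff using c1 c2 by blast
qed

lemma equiv_loc_rel: "equiv (carrier R \<times> S) frac_rel"
proof (rule equivI)
  show "frac_rel \<subseteq> (carrier R \<times> S) \<times> (carrier R \<times> S)"
    unfolding loc_rel_def by auto
  show "refl_on (carrier R \<times> S) frac_rel"
    unfolding refl_on_def
  proof
    fix x assume "x \<in> carrier R \<times> S"
    then show "(x, x) \<in> frac_rel" using S_one by (cases x) (auto simp: loc_rel_iff)
  qed
  show "sym frac_rel"
    unfolding sym_def
  proof (intro allI impI)
    fix x y assume "(x, y) \<in> frac_rel"
    then show "(y, x) \<in> frac_rel" by (cases x, cases y) (simp add: loc_rel_iff, metis)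
  qed
  show "trans frac_rel"
    unfolding trans_def using loc_rel_trans by (simp add: split_paired_all)
qed

lemma fraction_eq_iff: "a \<in> carrier R \<Longrightarrow> s \<in> S \<Longrightarrow> b \<in> carrier R \<Longrightarrow> t \<in> S \<Longrightarrow>
  fraction a s = fraction b t \<longleftrightarrow> (\<exists>u \<in> S. u \<otimes> (t \<otimes> a) = u \<otimes> (s \<otimes> b))"
  by (subst eq_equiv_class_iff[OF equiv_loc_rel]) (auto simp: loc_rel_iff)

lemma fraction_eqI: "a \<in> carrier R \<Longrightarrow> s \<in> S \<Longrightarrow> b \<in> carrier R \<Longrightarrow> t \<in> S \<Longrightarrow>
  t \<otimes> a = s \<otimes> b \<Longrightarrow> fraction a s = fraction b t"
  using fraction_eq_iff S_one by force

lemma fraction_mem: "a \<in> carrier R \<Longrightarrow> s \<in> S \<Longrightarrow> (a, s) \<in> fraction a s"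
  using equiv_class_self[OF equiv_loc_rel, of "(a, s)"] by simp

lemma loc_rel_mult_compat:
  assumes "((a, s), (a', s')) \<in> frac_rel" "((b, t), (b', t')) \<in> frac_rel"
  shows "((a \<otimes> b, s \<otimes> t), (a' \<otimes> b', s' \<otimes> t')) \<in> frac_rel"
proof -
  from assms(1) obtain u where u: "u \<in> S" "u \<otimes> (s' \<otimes> a) = u \<otimes> (s \<otimes> a')"
    and c1: "a \<in> carrier R" "s \<in> S" "a' \<in> carrier R" "s' \<in> S" unfolding loc_rel_iff by blast
  from assms(2) obtain v where v: "v \<in> S" "v \<otimes> (t' \<otimes> b) = v \<otimes> (t \<otimes> b')"
    and c2: "b \<in> carrier R" "t \<in> S" "b' \<in> carrier R" "t' \<in> S" unfolding loc_rel_iff by blast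
  have cs: "a \<in> carrier R" "b \<in> carrier R" "a' \<in> carrier R" "b' \<in> carrier R" "s \<in> carrier R" "t \<in> carrier R"
      "s' \<in> carrier R" "t' \<in> carrier R" "u \<in> carrier R" "v \<in> carrier R" using c1 c2 u v by auto
  have "(u \<otimes> v) \<otimes> ((s' \<otimes> t') \<otimes> (a \<otimes> b)) = (u \<otimes> (s' \<otimes> a)) \<otimes> (v \<otimes> (t' \<otimes> b))"
    using cs by (simp add: m_ac)
  also have "\<dots> = (u \<otimes> (s \<otimes> a')) \<otimes> (v \<otimes> (t \<otimes> b'))" using u v by simp
  also have "\<dots> = (u \<otimes> v) \<otimes> ((s \<otimes> t) \<otimes> (a' \<otimes> b'))" using cs by (simp add: m_ac)
  finally show ?thesis unfolding loc_rel_iff using c1 c2 u v S_mult by auto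
qed

lemma loc_rel_add_compat:
  assumes "((a, s), (a', s')) \<in> frac_rel" "((b, t), (b', t')) \<in> frac_rel"
  shows "((t \<otimes> a \<oplus> s \<otimes> b, s \<otimes> t), (t' \<otimes> a' \<oplus> s' \<otimes> b', s' \<otimes> t')) \<in> frac_rel"
proof -
  from assms(1) obtain u where u: "u \<in> S" "u \<otimes> (s' \<otimes> a) = u \<otimes> (s \<otimes> a')"
    and c1: "a \<in> carrier R" "s \<in> S" "a' \<in> carrier R" "s' \<in> S" unfolding loc_rel_iff by blast
  from assms(2) obtain v where v: "v \<in> S" "v \<otimes> (t' \<otimes> b) = v \<otimes> (t \<otimes> b')"
    and c2: "b \<in> carrier R" "t \<in> S" "b' \<in> carrier R" "t' \<in> S" unfolding loc_rel_iff by blast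
  have cs: "a \<in> carrier R" "b \<in> carrier R" "a' \<in> carrier R" "b' \<in> carrier R" "s \<in> carrier R" "t \<in> carrier R"
      "s' \<in> carrier R" "t' \<in> carrier R" "u \<in> carrier R" "v \<in> carrier R" using c1 c2 u v by auto
  have "(u \<otimes> v) \<otimes> ((s' \<otimes> t') \<otimes> (t \<otimes> a \<oplus> s \<otimes> b)) =
      (u \<otimes> (s' \<otimes> a)) \<otimes> (v \<otimes> t' \<otimes> t) \<oplus> (v \<otimes> (t' \<otimes> b)) \<otimes> (u \<otimes> s' \<otimes> s)"
    using cs by (simp add: m_ac r_distr)
  also have "\<dots> = (u \<otimes> (s \<otimes> a')) \<otimes> (v \<otimes> t' \<otimes> t) \<oplus> (v \<otimes> (t \<otimes> b')) \<otimes> (u \<otimes> s' \<otimes> s)"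
    using u v by simp
  also have "\<dots> = (u \<otimes> v) \<otimes> ((s \<otimes> t) \<otimes> (t' \<otimes> a' \<oplus> s' \<otimes> b'))"
    using cs by (simp add: m_ac r_distr)
  finally show ?thesis unfolding loc_rel_iff using c1 c2 u v S_mult by auto
qed

lemma loc_ring_carrier: "carrier R\<^sub>P = (carrier R \<times> S) // frac_rel"
  unfolding loc_ring_def Let_def by simp

lemma loc_ring_zero: "\<zero>\<^bsub>R\<^sub>P\<^esub> = fraction \<zero> \<one>"
  unfolding loc_ring_def Let_def by simp

lemma loc_ring_one: "\<one>\<^bsub>R\<^sub>P\<^esub> = fraction \<one> \<one>"
  unfolding loc_ring_def Let_def by simp

lemma loc_ring_mult:
  assumes "a \<in> carrier R" "s \<in> S" "b \<in> carrier R" "t \<in> S"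
  shows "fraction a s \<otimes>\<^bsub>R\<^sub>P\<^esub> fraction b t = fraction (a \<otimes> b) (s \<otimes> t)"
  unfolding loc_ring_def Let_def
  by (simp only: monoid.select_convs, rule equiv_Image_eq_class[OF equiv_loc_rel])
    (use assms fraction_mem in blast, auto intro: loc_rel_mult_compat)

lemma loc_ring_add:
  assumes "a \<in> carrier R" "s \<in> S" "b \<in> carrier R" "t \<in> S"
  shows "fraction a s \<oplus>\<^bsub>R\<^sub>P\<^esub> fraction b t = fraction (t \<otimes> a \<oplus> s \<otimes> b) (s \<otimes> t)"
  unfolding loc_ring_def Let_def
  by (simp only: ring.select_convs, rule equiv_Image_eq_class[OF equiv_loc_rel])
    (use assms fraction_mem in blast, auto intro: loc_rel_add_compat)

lemma loc_ring_elem: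
  assumes "U \<in> carrier R\<^sub>P"
  obtains a s where "a \<in> carrier R" "s \<in> S" "U = fraction a s"
  using assms unfolding loc_ring_carrier by (auto elim!: quotientE)

lemma fraction_closed: "a \<in> carrier R \<Longrightarrow> s \<in> S \<Longrightarrow> fraction a s \<in> carrier R\<^sub>P"
  unfolding loc_ring_carrier by (auto intro: quotientI)

lemma abelian_group_loc_ring: "abelian_group R\<^sub>P"
proof (rule abelian_groupI)
  fix x y assume "x \<in> carrier R\<^sub>P" "y \<in> carrier R\<^sub>P"
  then show "x \<oplus>\<^bsub>R\<^sub>P\<^esub> y \<in> carrier R\<^sub>P"
    by (auto elim!: loc_ring_elem simp: loc_ring_add intro!: fraction_closed S_mult)
next
  show "\<zero>\<^bsub>R\<^sub>P\<^esub> \<in> carrier R\<^sub>P" unfolding loc_ring_zero using S_one by (intro fraction_closed) auto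
next
  fix x y z assume "x \<in> carrier R\<^sub>P" "y \<in> carrier R\<^sub>P" "z \<in> carrier R\<^sub>P"
  then show "x \<oplus>\<^bsub>R\<^sub>P\<^esub> y \<oplus>\<^bsub>R\<^sub>P\<^esub> z = x \<oplus>\<^bsub>R\<^sub>P\<^esub> (y \<oplus>\<^bsub>R\<^sub>P\<^esub> z)"
    by (auto elim!: loc_ring_elem simp: loc_ring_add S_mult m_ac r_distr a_ac)
next
  fix x y assume "x \<in> carrier R\<^sub>P" "y \<in> carrier R\<^sub>P"
  then show "x \<oplus>\<^bsub>R\<^sub>P\<^esub> y = y \<oplus>\<^bsub>R\<^sub>P\<^esub> x"
    by (auto elim!: loc_ring_elem simp: loc_ring_add S_mult m_ac a_ac)
next
  fix x assume "x \<in> carrier R\<^sub>P"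
  then show "\<zero>\<^bsub>R\<^sub>P\<^esub> \<oplus>\<^bsub>R\<^sub>P\<^esub> x = x"
    using S_one by (auto elim!: loc_ring_elem simp: loc_ring_add loc_ring_zero)
next
  fix x assume "x \<in> carrier R\<^sub>P"
  then obtain a s where as: "a \<in> carrier R" "s \<in> S" "x = fraction a s" by (auto elim: loc_ring_elem)
  have "fraction (\<ominus> a) s \<oplus>\<^bsub>R\<^sub>P\<^esub> x = fraction (s \<otimes> \<ominus> a \<oplus> s \<otimes> a) (s \<otimes> s)"
    using as by (simp add: loc_ring_add)
  also have "\<dots> = fraction \<zero> (s \<otimes> s)" using as by (simp add: r_minus l_neg)
  also have "\<dots> = fraction \<zero> \<one>" using as S_one S_mult by (intro fraction_eqI) auto
  finally show "\<exists>y\<in>carrier R\<^sub>P. y \<oplus>\<^bsub>R\<^sub>P\<^esub> x = \<zero>\<^bsub>R\<^sub>P\<^esub>"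
    using as by (auto intro!: bexI[of _ "fraction (\<ominus> a) s"] fraction_closed simp: loc_ring_zero)
qed

lemma comm_monoid_loc_ring: "comm_monoid R\<^sub>P"
proof (rule comm_monoidI)
  fix x y assume "x \<in> carrier R\<^sub>P" "y \<in> carrier R\<^sub>P"
  then show "x \<otimes>\<^bsub>R\<^sub>P\<^esub> y \<in> carrier R\<^sub>P"
    by (auto elim!: loc_ring_elem simp: loc_ring_mult intro!: fraction_closed S_mult)
next
  show "\<one>\<^bsub>R\<^sub>P\<^esub> \<in> carrier R\<^sub>P" unfolding loc_ring_one using S_one by (intro fraction_closed) auto
next
  fix x y z assume "x \<in> carrier R\<^sub>P" "y \<in> carrier R\<^sub>P" "z \<in> carrier R\<^sub>P"
  then show "x \<otimes>\<^bsub>R\<^sub>P\<^esub> y \<otimes>\<^bsub>R\<^sub>P\<^esub> z = x \<otimes>\<^bsub>R\<^sub>P\<^esub> (y \<otimes>\<^bsub>R\<^sub>P\<^esub> z)"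
    by (auto elim!: loc_ring_elem simp: loc_ring_mult S_mult m_ac)
next
  fix x assume "x \<in> carrier R\<^sub>P"
  then show "\<one>\<^bsub>R\<^sub>P\<^esub> \<otimes>\<^bsub>R\<^sub>P\<^esub> x = x"
    using S_one by (auto elim!: loc_ring_elem simp: loc_ring_mult loc_ring_one)
next
  fix x y assume "x \<in> carrier R\<^sub>P" "y \<in> carrier R\<^sub>P"
  then show "x \<otimes>\<^bsub>R\<^sub>P\<^esub> y = y \<otimes>\<^bsub>R\<^sub>P\<^esub> x"
    by (auto elim!: loc_ring_elem simp: loc_ring_mult S_mult m_ac)
qed

lemma cring_loc_ring: "cring R\<^sub>P"
proof (rule cringI[OF abelian_group_loc_ring comm_monoid_loc_ring])
  fix x y z assume "x \<in> carrier R\<^sub>P" "y \<in> carrier R\<^sub>P" "z \<in> carrier R\<^sub>P"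
  then obtain a s b t c w where abc: "a \<in> carrier R" "s \<in> S" "x = fraction a s"
    "b \<in> carrier R" "t \<in> S" "y = fraction b t" "c \<in> carrier R" "w \<in> S" "z = fraction c w"
    by (metis loc_ring_elem)
  have e1: "(x \<oplus>\<^bsub>R\<^sub>P\<^esub> y) \<otimes>\<^bsub>R\<^sub>P\<^esub> z = fraction ((t \<otimes> a \<oplus> s \<otimes> b) \<otimes> c) ((s \<otimes> t) \<otimes> w)"
    using abc by (simp add: loc_ring_add loc_ring_mult S_mult)
  have e2: "x \<otimes>\<^bsub>R\<^sub>P\<^esub> z \<oplus>\<^bsub>R\<^sub>P\<^esub> y \<otimes>\<^bsub>R\<^sub>P\<^esub> z =
     fraction ((t \<otimes> w) \<otimes> (a \<otimes> c) \<oplus> (s \<otimes> w) \<otimes> (b \<otimes> c)) ((s \<otimes> w) \<otimes> (t \<otimes> w))"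
    using abc by (simp add: loc_ring_add loc_ring_mult S_mult)
  show "(x \<oplus>\<^bsub>R\<^sub>P\<^esub> y) \<otimes>\<^bsub>R\<^sub>P\<^esub> z = x \<otimes>\<^bsub>R\<^sub>P\<^esub> z \<oplus>\<^bsub>R\<^sub>P\<^esub> y \<otimes>\<^bsub>R\<^sub>P\<^esub> z"
    unfolding e1 e2 using abc S_mult
    by (intro fraction_eqI) (auto simp: m_ac l_distr r_distr)
qed

text \<open>The ideal \<open>P R\<^sub>P\<close>; it equals \<open>loc_ideal R P\<close>, but only one inclusion is needed.\<close>

definition "prime_fractions = {fraction a s | a s. a \<in> P \<and> s \<in> S}"

lemma prime_zero_closed: "\<zero> \<in> P"
  using additive_subgroup.zero_closed[OF ideal.axioms(1)[OF is_ideal]] .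

lemma prime_add_closed: "a \<in> P \<Longrightarrow> b \<in> P \<Longrightarrow> a \<oplus> b \<in> P"
  using additive_subgroup.a_closed[OF ideal.axioms(1)[OF is_ideal]] .

lemma ideal_prime_fractions: "ideal prime_fractions R\<^sub>P"
proof (rule cring.idealI_cring[OF cring_loc_ring])
  show "prime_fractions \<subseteq> carrier R\<^sub>P"
    unfolding prime_fractions_def using P_carrier by (auto intro!: fraction_closed)
  show "\<zero>\<^bsub>R\<^sub>P\<^esub> \<in> prime_fractions"
    unfolding prime_fractions_def loc_ring_zero using S_one prime_zero_closed by blast
next
  fix x y assume x: "x \<in> prime_fractions" and y: "y \<in> prime_fractions"
  obtain a s where as: "a \<in> P" "s \<in> S" "x = fraction a s" using x unfolding prime_fractions_def by blast
  obtain b t where bt: "b \<in> P" "t \<in> S" "y = fraction b t" using y unfolding prime_fractions_def by blast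
  have "x \<oplus>\<^bsub>R\<^sub>P\<^esub> y = fraction (t \<otimes> a \<oplus> s \<otimes> b) (s \<otimes> t)"
    using as bt P_carrier by (auto simp: loc_ring_add)
  moreover have "t \<otimes> a \<oplus> s \<otimes> b \<in> P" using as bt P_carrier by (intro prime_add_closed I_l_closed) auto
  moreover have "s \<otimes> t \<in> S" using as bt S_mult by auto
  ultimately show "x \<oplus>\<^bsub>R\<^sub>P\<^esub> y \<in> prime_fractions" unfolding prime_fractions_def by blast
next
  fix x y assume x: "x \<in> prime_fractions" and y: "y \<in> carrier R\<^sub>P"
  obtain a s where as: "a \<in> P" "s \<in> S" "x = fraction a s" using x unfolding prime_fractions_def by blast
  obtain c w where cw: "c \<in> carrier R" "w \<in> S" "y = fraction c w" using y by (rule loc_ring_elem)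
  have "y \<otimes>\<^bsub>R\<^sub>P\<^esub> x = fraction (c \<otimes> a) (w \<otimes> s)" using as cw P_carrier by (auto simp: loc_ring_mult)
  moreover have "c \<otimes> a \<in> P" using as cw by (simp add: I_l_closed)
  moreover have "w \<otimes> s \<in> S" using as cw S_mult by auto
  ultimately show "y \<otimes>\<^bsub>R\<^sub>P\<^esub> x \<in> prime_fractions" unfolding prime_fractions_def by blast
qed

lemma loc_ideal_subset_prime_fractions: "loc_ideal R P \<subseteq> prime_fractions"
proof -
  have "loc_map R P ` P \<subseteq> prime_fractions" unfolding loc_map_def prime_fractions_def using S_one by blast
  then show ?thesis unfolding loc_ideal_def
    using ring.genideal_minimal[OF cring.axioms(1)[OF cring_loc_ring] ideal_prime_fractions] by blast
qed

end

locale module_at_prime = ring_at_prime P R + ring_module R M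
  for P :: "'a set" and R :: "'a ring" (structure) and M :: "('a, 'b) module" (structure)

context module_at_prime
begin

abbreviation "mfrac_rel \<equiv> loc_mod_rel R M S"
abbreviation "mfraction m s \<equiv> mfrac_rel `` {(m, s)}"
abbreviation "M\<^sub>P \<equiv> loc_mod R M P"

lemma loc_mod_rel_iff: "((m, s), (n, t)) \<in> mfrac_rel \<longleftrightarrow>
   m \<in> carrier M \<and> s \<in> S \<and> n \<in> carrier M \<and> t \<in> S \<and>
   (\<exists>u \<in> S. u \<odot>\<^bsub>M\<^esub> (t \<odot>\<^bsub>M\<^esub> m) = u \<odot>\<^bsub>M\<^esub> (s \<odot>\<^bsub>M\<^esub> n))"
proof -
  have "u \<odot>\<^bsub>M\<^esub> (t \<odot>\<^bsub>M\<^esub> m \<ominus>\<^bsub>M\<^esub> s \<odot>\<^bsub>M\<^esub> n) = \<zero>\<^bsub>M\<^esub> \<longleftrightarrow> u \<odot>\<^bsub>M\<^esub> (t \<odot>\<^bsub>M\<^esub> m) = u \<odot>\<^bsub>M\<^esub> (s \<odot>\<^bsub>M\<^esub> n)"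
    if "m \<in> carrier M" "n \<in> carrier M" "s \<in> carrier R" "t \<in> carrier R" "u \<in> carrier R" for u m n s t
  proof -
    have "u \<odot>\<^bsub>M\<^esub> (t \<odot>\<^bsub>M\<^esub> m \<ominus>\<^bsub>M\<^esub> s \<odot>\<^bsub>M\<^esub> n) = u \<odot>\<^bsub>M\<^esub> (t \<odot>\<^bsub>M\<^esub> m) \<ominus>\<^bsub>M\<^esub> u \<odot>\<^bsub>M\<^esub> (s \<odot>\<^bsub>M\<^esub> n)"
      using that by (simp add: M.minus_eq smult_r_distr smult_r_minus)
    then show ?thesis using that by (simp add: M.minus_eq_zero_iff)
  qed
  then show ?thesis unfolding loc_mod_rel_def by auto
qed

lemma loc_mod_rel_trans:
  assumes "((a, s), (b, t)) \<in> mfrac_rel" "((b, t), (c, w)) \<in> mfrac_rel"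
  shows "((a, s), (c, w)) \<in> mfrac_rel"
proof -
  from assms(1) obtain u where u: "u \<in> S" "u \<odot>\<^bsub>M\<^esub> (t \<odot>\<^bsub>M\<^esub> a) = u \<odot>\<^bsub>M\<^esub> (s \<odot>\<^bsub>M\<^esub> b)"
    and c1: "a \<in> carrier M" "s \<in> S" "b \<in> carrier M" "t \<in> S"
    unfolding loc_mod_rel_iff by blast
  from assms(2) obtain v where v: "v \<in> S" "v \<odot>\<^bsub>M\<^esub> (w \<odot>\<^bsub>M\<^esub> b) = v \<odot>\<^bsub>M\<^esub> (t \<odot>\<^bsub>M\<^esub> c)"
    and c2: "c \<in> carrier M" "w \<in> S"
    unfolding loc_mod_rel_iff by blast
  have cs: "a \<in> carrier M" "b \<in> carrier M" "c \<in> carrier M" "s \<in> carrier R" "t \<in> carrier R"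
    "w \<in> carrier R" "u \<in> carrier R" "v \<in> carrier R" using c1 c2 u v by auto
  have "(u \<otimes> v \<otimes> t) \<odot>\<^bsub>M\<^esub> (w \<odot>\<^bsub>M\<^esub> a) = (v \<otimes> w) \<odot>\<^bsub>M\<^esub> (u \<odot>\<^bsub>M\<^esub> (t \<odot>\<^bsub>M\<^esub> a))"
    using cs by (simp add: smult_assoc1[symmetric] m_ac)
  also have "\<dots> = (v \<otimes> w) \<odot>\<^bsub>M\<^esub> (u \<odot>\<^bsub>M\<^esub> (s \<odot>\<^bsub>M\<^esub> b))" using u by simp
  also have "\<dots> = (u \<otimes> s) \<odot>\<^bsub>M\<^esub> (v \<odot>\<^bsub>M\<^esub> (w \<odot>\<^bsub>M\<^esub> b))"
    using cs by (simp add: smult_assoc1[symmetric] m_ac)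
  also have "\<dots> = (u \<otimes> s) \<odot>\<^bsub>M\<^esub> (v \<odot>\<^bsub>M\<^esub> (t \<odot>\<^bsub>M\<^esub> c))" using v by simp
  also have "\<dots> = (u \<otimes> v \<otimes> t) \<odot>\<^bsub>M\<^esub> (s \<odot>\<^bsub>M\<^esub> c)"
    using cs by (simp add: smult_assoc1[symmetric] m_ac)
  finally have "(u \<otimes> v \<otimes> t) \<odot>\<^bsub>M\<^esub> (w \<odot>\<^bsub>M\<^esub> a) = (u \<otimes> v \<otimes> t) \<odot>\<^bsub>M\<^esub> (s \<odot>\<^bsub>M\<^esub> c)" .
  moreover have "u \<otimes> v \<otimes> t \<in> S" using S_mult u v c1 by auto
  ultimately show ?thesis unfolding loc_mod_rel_iff using c1 c2 by blast
qed

lemma equiv_loc_mod_rel: "equiv (carrier M \<times> S) mfrac_rel"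
proof (rule equivI)
  show "mfrac_rel \<subseteq> (carrier M \<times> S) \<times> (carrier M \<times> S)"
    unfolding loc_mod_rel_def by blast
  show "refl_on (carrier M \<times> S) mfrac_rel"
    unfolding refl_on_def
  proof
    fix x assume "x \<in> carrier M \<times> S"
    then show "(x, x) \<in> mfrac_rel" using S_one by (cases x) (auto simp: loc_mod_rel_iff)
  qed
  show "sym mfrac_rel"
    unfolding sym_def
  proof (intro allI impI)
    fix x y assume "(x, y) \<in> mfrac_rel"
    then show "(y, x) \<in> mfrac_rel" by (cases x, cases y) (simp add: loc_mod_rel_iff, metis)
  qed
  show "trans mfrac_rel"
    unfolding trans_def using loc_mod_rel_trans by (simp add: split_paired_all)
qed

lemma mfraction_eq_iff: "m \<in> carrier M \<Longrightarrow> s \<in> S \<Longrightarrow> n \<in> carrier M \<Longrightarrow> t \<in> S \<Longrightarrow>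
  mfraction m s = mfraction n t \<longleftrightarrow> (\<exists>u \<in> S. u \<odot>\<^bsub>M\<^esub> (t \<odot>\<^bsub>M\<^esub> m) = u \<odot>\<^bsub>M\<^esub> (s \<odot>\<^bsub>M\<^esub> n))"
  by (subst eq_equiv_class_iff[OF equiv_loc_mod_rel]) (auto simp: loc_mod_rel_iff)

lemma mfraction_mem: "m \<in> carrier M \<Longrightarrow> s \<in> S \<Longrightarrow> (m, s) \<in> mfraction m s"
  using equiv_class_self[OF equiv_loc_mod_rel, of "(m, s)"] by simp

lemma loc_mod_rel_add_compat:
  assumes "((a, s), (a', s')) \<in> mfrac_rel" "((b, t), (b', t')) \<in> mfrac_rel"
  shows "((t \<odot>\<^bsub>M\<^esub> a \<oplus>\<^bsub>M\<^esub> s \<odot>\<^bsub>M\<^esub> b, s \<otimes> t), (t' \<odot>\<^bsub>M\<^esub> a' \<oplus>\<^bsub>M\<^esub> s' \<odot>\<^bsub>M\<^esub> b', s' \<otimes> t')) \<in> mfrac_rel"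
proof -
  from assms(1) obtain u where u: "u \<in> S" "u \<odot>\<^bsub>M\<^esub> (s' \<odot>\<^bsub>M\<^esub> a) = u \<odot>\<^bsub>M\<^esub> (s \<odot>\<^bsub>M\<^esub> a')"
    and c1: "a \<in> carrier M" "s \<in> S" "a' \<in> carrier M" "s' \<in> S" unfolding loc_mod_rel_iff by blast
  from assms(2) obtain v where v: "v \<in> S" "v \<odot>\<^bsub>M\<^esub> (t' \<odot>\<^bsub>M\<^esub> b) = v \<odot>\<^bsub>M\<^esub> (t \<odot>\<^bsub>M\<^esub> b')"
    and c2: "b \<in> carrier M" "t \<in> S" "b' \<in> carrier M" "t' \<in> S" unfolding loc_mod_rel_iff by blast
  have cs: "a \<in> carrier M" "b \<in> carrier M" "a' \<in> carrier M" "b' \<in> carrier M" "s \<in> carrier R" "t \<in> carrier R"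
      "s' \<in> carrier R" "t' \<in> carrier R" "u \<in> carrier R" "v \<in> carrier R" using c1 c2 u v by auto
  have "(u \<otimes> v) \<odot>\<^bsub>M\<^esub> ((s' \<otimes> t') \<odot>\<^bsub>M\<^esub> (t \<odot>\<^bsub>M\<^esub> a \<oplus>\<^bsub>M\<^esub> s \<odot>\<^bsub>M\<^esub> b)) =
      (v \<otimes> t' \<otimes> t) \<odot>\<^bsub>M\<^esub> (u \<odot>\<^bsub>M\<^esub> (s' \<odot>\<^bsub>M\<^esub> a)) \<oplus>\<^bsub>M\<^esub> (u \<otimes> s' \<otimes> s) \<odot>\<^bsub>M\<^esub> (v \<odot>\<^bsub>M\<^esub> (t' \<odot>\<^bsub>M\<^esub> b))"
    using cs by (simp add: smult_r_distr smult_assoc1[symmetric] m_ac)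
  also have "\<dots> = (v \<otimes> t' \<otimes> t) \<odot>\<^bsub>M\<^esub> (u \<odot>\<^bsub>M\<^esub> (s \<odot>\<^bsub>M\<^esub> a')) \<oplus>\<^bsub>M\<^esub> (u \<otimes> s' \<otimes> s) \<odot>\<^bsub>M\<^esub> (v \<odot>\<^bsub>M\<^esub> (t \<odot>\<^bsub>M\<^esub> b'))"
    using u v by simp
  also have "\<dots> = (u \<otimes> v) \<odot>\<^bsub>M\<^esub> ((s \<otimes> t) \<odot>\<^bsub>M\<^esub> (t' \<odot>\<^bsub>M\<^esub> a' \<oplus>\<^bsub>M\<^esub> s' \<odot>\<^bsub>M\<^esub> b'))"
    using cs by (simp add: smult_r_distr smult_assoc1[symmetric] m_ac)
  finally show ?thesis unfolding loc_mod_rel_iff using c1 c2 u v S_mult by auto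
qed

lemma loc_mod_rel_smult_compat:
  assumes "((a, s), (a', s')) \<in> frac_rel" "((m, t), (m', t')) \<in> mfrac_rel"
  shows "((a \<odot>\<^bsub>M\<^esub> m, s \<otimes> t), (a' \<odot>\<^bsub>M\<^esub> m', s' \<otimes> t')) \<in> mfrac_rel"
proof -
  from assms(1) obtain u where u: "u \<in> S" "u \<otimes> (s' \<otimes> a) = u \<otimes> (s \<otimes> a')"
    and c1: "a \<in> carrier R" "s \<in> S" "a' \<in> carrier R" "s' \<in> S" unfolding loc_rel_iff by blast
  from assms(2) obtain v where v: "v \<in> S" "v \<odot>\<^bsub>M\<^esub> (t' \<odot>\<^bsub>M\<^esub> m) = v \<odot>\<^bsub>M\<^esub> (t \<odot>\<^bsub>M\<^esub> m')"
    and c2: "m \<in> carrier M" "t \<in> S" "m' \<in> carrier M" "t' \<in> S" unfolding loc_mod_rel_iff by blast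
  have cs: "a \<in> carrier R" "a' \<in> carrier R" "m \<in> carrier M" "m' \<in> carrier M" "s \<in> carrier R" "t \<in> carrier R"
      "s' \<in> carrier R" "t' \<in> carrier R" "u \<in> carrier R" "v \<in> carrier R" using c1 c2 u v by auto
  have "(u \<otimes> v) \<odot>\<^bsub>M\<^esub> ((s' \<otimes> t') \<odot>\<^bsub>M\<^esub> (a \<odot>\<^bsub>M\<^esub> m)) = (u \<otimes> (s' \<otimes> a)) \<odot>\<^bsub>M\<^esub> (v \<odot>\<^bsub>M\<^esub> (t' \<odot>\<^bsub>M\<^esub> m))"
    using cs by (simp add: smult_assoc1[symmetric] m_ac)
  also have "\<dots> = (u \<otimes> (s \<otimes> a')) \<odot>\<^bsub>M\<^esub> (v \<odot>\<^bsub>M\<^esub> (t \<odot>\<^bsub>M\<^esub> m'))" using u v by simp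
  also have "\<dots> = (u \<otimes> v) \<odot>\<^bsub>M\<^esub> ((s \<otimes> t) \<odot>\<^bsub>M\<^esub> (a' \<odot>\<^bsub>M\<^esub> m'))"
    using cs by (simp add: smult_assoc1[symmetric] m_ac)
  finally show ?thesis unfolding loc_mod_rel_iff using c1 c2 u v S_mult by auto
qed

lemma loc_mod_carrier: "carrier M\<^sub>P = (carrier M \<times> S) // mfrac_rel"
  unfolding loc_mod_def Let_def by (simp only: partial_object.select_convs)

lemma loc_mod_zero: "\<zero>\<^bsub>M\<^sub>P\<^esub> = mfraction \<zero>\<^bsub>M\<^esub> \<one>"
  unfolding loc_mod_def Let_def by (simp only: ring.select_convs)

lemma loc_mod_add:
  assumes "m \<in> carrier M" "s \<in> S" "n \<in> carrier M" "t \<in> S"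
  shows "mfraction m s \<oplus>\<^bsub>M\<^sub>P\<^esub> mfraction n t =
    mfraction (t \<odot>\<^bsub>M\<^esub> m \<oplus>\<^bsub>M\<^esub> s \<odot>\<^bsub>M\<^esub> n) (s \<otimes> t)"
  unfolding loc_mod_def Let_def
proof (simp only: ring.select_convs, rule equiv_Image_eq_class[OF equiv_loc_mod_rel])
  show "(t \<odot>\<^bsub>M\<^esub> m \<oplus>\<^bsub>M\<^esub> s \<odot>\<^bsub>M\<^esub> n, s \<otimes> t) \<in> {(t' \<odot>\<^bsub>M\<^esub> m' \<oplus>\<^bsub>M\<^esub> s' \<odot>\<^bsub>M\<^esub> n', s' \<otimes> t') |m' s' n' t'.
      (m', s') \<in> mfraction m s \<and> (n', t') \<in> mfraction n t}"
    using mfraction_mem[OF assms(1,2)] mfraction_mem[OF assms(3,4)] by blast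
qed (auto intro: loc_mod_rel_add_compat)

lemma loc_mod_smult:
  assumes "a \<in> carrier R" "s \<in> S" "m \<in> carrier M" "t \<in> S"
  shows "fraction a s \<odot>\<^bsub>M\<^sub>P\<^esub> mfraction m t = mfraction (a \<odot>\<^bsub>M\<^esub> m) (s \<otimes> t)"
  unfolding loc_mod_def Let_def
proof (simp only: module.select_convs, rule equiv_Image_eq_class[OF equiv_loc_mod_rel])
  show "(a \<odot>\<^bsub>M\<^esub> m, s \<otimes> t) \<in> {(a' \<odot>\<^bsub>M\<^esub> m', s' \<otimes> t') |a' s' m' t'.
      (a', s') \<in> fraction a s \<and> (m', t') \<in> mfraction m t}"
    using fraction_mem[OF assms(1,2)] mfraction_mem[OF assms(3,4)] by blast
qed (auto intro: loc_mod_rel_smult_compat)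

lemma loc_mod_elem:
  assumes "U \<in> carrier M\<^sub>P"
  obtains m s where "m \<in> carrier M" "s \<in> S" "U = mfraction m s"
  using assms unfolding loc_mod_carrier by (auto elim!: quotientE)

lemma mfraction_closed: "m \<in> carrier M \<Longrightarrow> s \<in> S \<Longrightarrow> mfraction m s \<in> carrier M\<^sub>P"
  unfolding loc_mod_carrier by (auto intro: quotientI)

lemma abelian_monoid_loc_mod: "abelian_monoid M\<^sub>P"
proof (rule abelian_monoidI)
  fix x y assume "x \<in> carrier M\<^sub>P" "y \<in> carrier M\<^sub>P"
  then show "x \<oplus>\<^bsub>M\<^sub>P\<^esub> y \<in> carrier M\<^sub>P"
    by (auto elim!: loc_mod_elem simp: loc_mod_add intro!: mfraction_closed)
next
  show "\<zero>\<^bsub>M\<^sub>P\<^esub> \<in> carrier M\<^sub>P" unfolding loc_mod_zero using S_one by (intro mfraction_closed) auto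
next
  fix x y z assume "x \<in> carrier M\<^sub>P" "y \<in> carrier M\<^sub>P" "z \<in> carrier M\<^sub>P"
  then obtain a s b t c w where abc: "a \<in> carrier M" "s \<in> S" "x = mfraction a s"
    "b \<in> carrier M" "t \<in> S" "y = mfraction b t" "c \<in> carrier M" "w \<in> S" "z = mfraction c w"
    by (metis loc_mod_elem)
  have e1: "x \<oplus>\<^bsub>M\<^sub>P\<^esub> y \<oplus>\<^bsub>M\<^sub>P\<^esub> z =
     mfraction (w \<odot>\<^bsub>M\<^esub> (t \<odot>\<^bsub>M\<^esub> a \<oplus>\<^bsub>M\<^esub> s \<odot>\<^bsub>M\<^esub> b) \<oplus>\<^bsub>M\<^esub> (s \<otimes> t) \<odot>\<^bsub>M\<^esub> c) ((s \<otimes> t) \<otimes> w)"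
    using abc by (simp add: loc_mod_add)
  have e2: "x \<oplus>\<^bsub>M\<^sub>P\<^esub> (y \<oplus>\<^bsub>M\<^sub>P\<^esub> z) =
     mfraction ((t \<otimes> w) \<odot>\<^bsub>M\<^esub> a \<oplus>\<^bsub>M\<^esub> s \<odot>\<^bsub>M\<^esub> (w \<odot>\<^bsub>M\<^esub> b \<oplus>\<^bsub>M\<^esub> t \<odot>\<^bsub>M\<^esub> c)) (s \<otimes> (t \<otimes> w))"
    using abc by (simp add: loc_mod_add)
  have "w \<odot>\<^bsub>M\<^esub> (t \<odot>\<^bsub>M\<^esub> a \<oplus>\<^bsub>M\<^esub> s \<odot>\<^bsub>M\<^esub> b) \<oplus>\<^bsub>M\<^esub> (s \<otimes> t) \<odot>\<^bsub>M\<^esub> c =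
      (t \<otimes> w) \<odot>\<^bsub>M\<^esub> a \<oplus>\<^bsub>M\<^esub> s \<odot>\<^bsub>M\<^esub> (w \<odot>\<^bsub>M\<^esub> b \<oplus>\<^bsub>M\<^esub> t \<odot>\<^bsub>M\<^esub> c)"
    using abc by (simp add: smult_r_distr smult_assoc1[symmetric] m_ac M.a_ac)
  moreover have "(s \<otimes> t) \<otimes> w = s \<otimes> (t \<otimes> w)" using abc by (simp add: m_ac)
  ultimately show "x \<oplus>\<^bsub>M\<^sub>P\<^esub> y \<oplus>\<^bsub>M\<^sub>P\<^esub> z = x \<oplus>\<^bsub>M\<^sub>P\<^esub> (y \<oplus>\<^bsub>M\<^sub>P\<^esub> z)"
    unfolding e1 e2 by simp
next
  fix x assume "x \<in> carrier M\<^sub>P"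
  then show "\<zero>\<^bsub>M\<^sub>P\<^esub> \<oplus>\<^bsub>M\<^sub>P\<^esub> x = x"
    using S_one by (auto elim!: loc_mod_elem simp: loc_mod_add loc_mod_zero)
next
  fix x y assume "x \<in> carrier M\<^sub>P" "y \<in> carrier M\<^sub>P"
  then show "x \<oplus>\<^bsub>M\<^sub>P\<^esub> y = y \<oplus>\<^bsub>M\<^sub>P\<^esub> x"
    by (auto elim!: loc_mod_elem simp: loc_mod_add m_ac M.a_ac)
qed

lemma mfraction_eq_zero_iff:
  assumes "m \<in> carrier M" "s \<in> S"
  shows "mfraction m s = \<zero>\<^bsub>M\<^sub>P\<^esub> \<longleftrightarrow> \<not> ann M R m \<subseteq> P"
proof -
  have "mfraction m s = \<zero>\<^bsub>M\<^sub>P\<^esub> \<longleftrightarrow> (\<exists>u \<in> S. u \<odot>\<^bsub>M\<^esub> (\<one> \<odot>\<^bsub>M\<^esub> m) = u \<odot>\<^bsub>M\<^esub> (s \<odot>\<^bsub>M\<^esub> \<zero>\<^bsub>M\<^esub>))"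
    unfolding loc_mod_zero using assms S_one by (intro mfraction_eq_iff) auto
  also have "\<dots> \<longleftrightarrow> \<not> ann M R m \<subseteq> P" using assms unfolding ann_def by auto
  finally show ?thesis .
qed

end

section \<open>Zero divisors on the localized polynomial module\<close>

sublocale ring_at_prime \<subseteq> loc: plain_cring "loc_ring R P"
  unfolding plain_cring_def by (rule cring_loc_ring)

context ring_at_prime
begin

lemma poly_prime_fractions_numerators:
  assumes x: "x \<in> carrier (poly_ring R\<^sub>P m)" "\<forall>\<alpha>. x \<alpha> \<in> prime_fractions"
  obtains F where "finite F" "F \<subseteq> P" "\<And>\<alpha>. \<exists>a \<in> F. \<exists>s \<in> S. x \<alpha> = fraction a s"
proof -
  define supp where "supp = {\<alpha>. x \<alpha> \<noteq> \<zero>\<^bsub>R\<^sub>P\<^esub>}"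
  have "finite supp" unfolding supp_def using loc.poly_finite_support[OF x(1)] .
  have "\<forall>\<alpha> \<in> supp. \<exists>p. fst p \<in> P \<and> snd p \<in> S \<and> x \<alpha> = fraction (fst p) (snd p)"
    using x(2) unfolding prime_fractions_def by fastforce
  then obtain rep where rep: "\<And>\<alpha>. \<alpha> \<in> supp \<Longrightarrow>
      fst (rep \<alpha>) \<in> P \<and> snd (rep \<alpha>) \<in> S \<and> x \<alpha> = fraction (fst (rep \<alpha>)) (snd (rep \<alpha>))"
    by metis
  show thesis
  proof
    \<comment> \<open>\<open>\<zero>\<close> serves as numerator of the vanishing coefficients\<close>
    show "finite (insert \<zero> (fst ` rep ` supp))" using \<open>finite supp\<close> by simp
    show "insert \<zero> (fst ` rep ` supp) \<subseteq> P" using rep prime_zero_closed by auto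
    fix \<alpha>
    show "\<exists>a \<in> insert \<zero> (fst ` rep ` supp). \<exists>s \<in> S. x \<alpha> = fraction a s"
    proof (cases "\<alpha> \<in> supp")
      case True then show ?thesis using rep by blast
    next
      case False then show ?thesis using S_one unfolding supp_def loc_ring_zero by auto
    qed
  qed
qed

end

context module_at_prime
begin

lemma fraction_smult_mfraction_eq_zero_iff:
  assumes "a \<in> carrier R" "s \<in> S" "y \<in> carrier M" "t \<in> S"
  shows "fraction a s \<odot>\<^bsub>M\<^sub>P\<^esub> mfraction y t = \<zero>\<^bsub>M\<^sub>P\<^esub> \<longleftrightarrow> \<not> ann M R (a \<odot>\<^bsub>M\<^esub> y) \<subseteq> P"
  using assms by (simp add: loc_mod_smult mfraction_eq_zero_iff)

lemma poly_prime_fractions_zero_divisor: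
  assumes z: "z \<in> carrier M" "minimal_prime_over R (ann M R z) P"
    and x: "x \<in> carrier (poly_ring R\<^sub>P m)" "\<forall>\<alpha>. x \<alpha> \<in> prime_fractions"
  shows "\<exists>v \<in> carrier (poly_mod R\<^sub>P M\<^sub>P m).
    v \<noteq> \<zero>\<^bsub>poly_mod R\<^sub>P M\<^sub>P m\<^esub> \<and> x \<odot>\<^bsub>poly_mod R\<^sub>P M\<^sub>P m\<^esub> v = \<zero>\<^bsub>poly_mod R\<^sub>P M\<^sub>P m\<^esub>"
proof -
  obtain F where F: "finite F" "F \<subseteq> P" and rep: "\<And>\<alpha>. \<exists>a \<in> F. \<exists>s \<in> S. x \<alpha> = fraction a s"
    using poly_prime_fractions_numerators[OF x] by blast
  have F_carrier: "F \<subseteq> carrier R" using F(2) P_carrier by blast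
  have ann_z: "ann M R z \<subseteq> P" using z(2) unfolding minimal_prime_over_def by blast
  have "\<exists>u \<in> S. \<exists>n::nat. u \<otimes> a [^] n \<in> ann M R z" if "a \<in> F" for a
    using minimal_prime_over_pow_witness[OF is_cring ann_ideal[OF z(1)] z(2)] that F(2) by blast
  then obtain y where y: "y \<in> carrier M" "ann M R y \<subseteq> P" "\<forall>a \<in> F. \<not> ann M R (a \<odot>\<^bsub>M\<^esub> y) \<subseteq> P"
    using common_annihilated_multiple[OF z(1) ann_z F(1) F_carrier] by blast
  have kill: "x \<beta> \<odot>\<^bsub>M\<^sub>P\<^esub> mfraction b \<one> = \<zero>\<^bsub>M\<^sub>P\<^esub>" if "b = y \<or> b = \<zero>\<^bsub>M\<^esub>" for b \<beta>
  proof -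
    obtain a s where as: "a \<in> F" "s \<in> S" "x \<beta> = fraction a s" using rep by blast
    have a: "a \<in> carrier R" using as(1) F_carrier by blast
    have b: "b \<in> carrier M" using that y(1) by auto
    have "\<not> ann M R (a \<odot>\<^bsub>M\<^esub> b) \<subseteq> P"
      using that y(3) as(1) a S_one unfolding ann_def by auto
    then show ?thesis
      unfolding as(3) using fraction_smult_mfraction_eq_zero_iff[OF a as(2) b S_one] by blast
  qed
  have "const_poly_mod M\<^sub>P (mfraction y \<one>) \<in> carrier (poly_mod R\<^sub>P M\<^sub>P m)"
    using y(1) S_one
    by (intro const_poly_mod_closed mfraction_closed abelian_monoid.zero_closed[OF abelian_monoid_loc_mod]) auto
  moreover have "const_poly_mod M\<^sub>P (mfraction y \<one>) \<noteq> \<zero>\<^bsub>poly_mod R\<^sub>P M\<^sub>P m\<^esub>"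
    using y(1,2) S_one by (simp add: const_poly_mod_eq_zero_iff mfraction_eq_zero_iff)
  moreover have "x \<odot>\<^bsub>poly_mod R\<^sub>P M\<^sub>P m\<^esub> const_poly_mod M\<^sub>P (mfraction y \<one>) = \<zero>\<^bsub>poly_mod R\<^sub>P M\<^sub>P m\<^esub>"
    using kill by (intro smult_const_poly_mod_eq_zero abelian_monoid_loc_mod) (auto simp: loc_mod_zero)
  ultimately show ?thesis by blast
qed

lemma grade_poly_ext_eq_0:
  assumes "z \<in> carrier M" "minimal_prime_over R (ann M R z) P"
  shows "grade (poly_ring R\<^sub>P m) (genideal (poly_ring R\<^sub>P m) (const_poly R\<^sub>P ` loc_ideal R P))
    (poly_mod R\<^sub>P M\<^sub>P m) = 0"
proof (rule grade_eq_0_if_zero_divisors)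
  show "\<zero>\<^bsub>poly_mod R\<^sub>P M\<^sub>P m\<^esub> \<in> carrier (poly_mod R\<^sub>P M\<^sub>P m)"
    using abelian_monoid.zero_closed[OF abelian_monoid_loc_mod] by (rule poly_mod_zero_closed)
next
  fix x assume "x \<in> genideal (poly_ring R\<^sub>P m) (const_poly R\<^sub>P ` loc_ideal R P)"
  then have "x \<in> carrier (poly_ring R\<^sub>P m)" "\<forall>\<alpha>. x \<alpha> \<in> prime_fractions"
    using loc.genideal_const_poly_subset[OF ideal_prime_fractions loc_ideal_subset_prime_fractions]
    by blast+
  then show "\<exists>v \<in> carrier (poly_mod R\<^sub>P M\<^sub>P m).
    v \<noteq> \<zero>\<^bsub>poly_mod R\<^sub>P M\<^sub>P m\<^esub> \<and> x \<odot>\<^bsub>poly_mod R\<^sub>P M\<^sub>P m\<^esub> v = \<zero>\<^bsub>poly_mod R\<^sub>P M\<^sub>P m\<^esub>"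
    by (rule poly_prime_fractions_zero_divisor[OF assms])
qed

end

theorem lemma2p7:
  fixes R :: "'a ring" and M :: "('a, 'b) module" and P :: "'a set"
  assumes "module R M"
    and "weakly_associated R M P"
  shows "p_grade (loc_ring R P) (loc_ideal R P) (loc_mod R M P) = 0"
proof -
  obtain z where z: "z \<in> carrier M" "minimal_prime_over R (ann M R z) P"
    using assms(2) unfolding weakly_associated_def by blast
  then interpret module_at_prime P R M
    using assms(1) unfolding module_at_prime_def ring_at_prime_def ring_module_def
      minimal_prime_over_def by blast
  show ?thesis unfolding p_grade_def using grade_poly_ext_eq_0[OF z] by simp
qed

end
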